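(* If $\mathcal U$ and $\mathcal V$ are universal Martin-Löf tests, then $\mathsf{LAY}_{\mathcal V}\le_{\mathrm{sW}}\mathsf{LAY}_{\mathcal U}$.
   Context: Cantor space $2^\omega$, Lebesgue measure $\lambda$. A Martin-Löf (ML) test is a sequence $(\mathcal V_i)_{i\in\omega}$ of open subsets of $2^\omega$ such that $\{\langle i,\sigma\rangle:[\sigma]\subseteq\mathcal V_i\}$ is c.e. and $\lambda(\mathcal V_i)\le 2^{-i}$; it is universal if $\bigcap_i\mathcal V'_i\subseteq\bigcap_i\mathcal V_i$ for every ML-test $\mathcal V'$. $\mathrm{MLR}$ is the set of Martin-Löf random sequences ($=2^\omega\setminus\bigcap_i\mathcal U_i$ for any universal $\mathcal U$). Represented spaces: a representation of a set $X$ is a surjective partial map $\delta_X:\subseteq\omega^\omega\to X$. A realizer of a multi-valued partial function $f:\subseteq X\rightrightarrows Y$ is a partial $\Gamma:\subseteq\omega^\omega\to\omega^\omega$ with $\delta_Y(\Gamma(p))\in f(\delta_X(p))$ for all $p\in\mathrm{dom}(f\circ\delta_X)$. $f\le_{\mathrm{sW}} g$ (strong Weihrauch reducibility) if there are Turing functionals $\Phi,\Psi$ such that $\Psi\circ\Gamma\circ\Phi$ realizes $f$ for every realizer $\Gamma$ of $g$. $\mathrm{MLR}$ is represented by the identity on $\mathrm{MLR}\subseteq 2^\omega\subseteq\omega^\omega$, and $\omega$ by $\chi_{\{n\}}\mapsto n$. For a universal ML-test $\mathcal U$, $\mathsf{LAY}_{\mathcal U}\colon\mathrm{MLR}\rightrightarrows\omega$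 is the multi-valued function $\mathsf{LAY}_{\mathcal U}(X)=\{i: X\notin\mathcal U_i\}$. *)

theory Defs
  imports "HOL-Probability.Probability" "HOL-Library.Nat_Bijection"
begin

datatype recf = Zr | Sc | Proj nat | Comp recf "recf list" | Prim recf recf | Mn recf | Orc

inductive eval :: "(nat \<Rightarrow> nat) \<Rightarrow> recf \<Rightarrow> nat list \<Rightarrow> nat \<Rightarrow> bool" for p where
  ev_Z: "eval p Zr xs 0"
| ev_S: "eval p Sc (x # xs) (Suc x)"
| ev_Proj: "i < length xs \<Longrightarrow> eval p (Proj i) xs (xs ! i)"
| ev_Comp: "length ys = length hs \<Longrightarrow> (\<forall>k < length hs. eval p (hs ! k) xs (ys ! k))
     \<Longrightarrow> eval p g ys z \<Longrightarrow> eval p (Comp g hs) xs z"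
| ev_Prim0: "eval p g xs y \<Longrightarrow> eval p (Prim g h) (0 # xs) y"
| ev_PrimS: "eval p (Prim g h) (n # xs) y \<Longrightarrow> eval p h (y # n # xs) z
     \<Longrightarrow> eval p (Prim g h) (Suc n # xs) z"
| ev_Mn: "eval p g (n # xs) 0 \<Longrightarrow> (\<forall>m < n. \<exists>y. y \<noteq> 0 \<and> eval p g (m # xs) y)
     \<Longrightarrow> eval p (Mn g) xs n"
| ev_Orc: "eval p Orc (x # xs) (p x)"

definition turing_functional :: "((nat \<Rightarrow> nat) \<Rightarrow> (nat \<Rightarrow> nat) option) \<Rightarrow> bool" where
  "turing_functional \<Phi> \<longleftrightarrow> (\<exists>e. \<forall>p. (case \<Phi> p of
       Some q \<Rightarrow> (\<forall>n. eval p e [n] (q n))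
     | None \<Rightarrow> \<not> (\<forall>n. \<exists>y. eval p e [n] y)))"

definition ce :: "nat set \<Rightarrow> bool" where
  "ce A \<longleftrightarrow> (\<exists>e. \<forall>x. x \<in> A \<longleftrightarrow> (\<exists>y. eval (\<lambda>_. 0) e [x] y))"

type_synonym cantor = "nat \<Rightarrow> bool"

definition cyl :: "bool list \<Rightarrow> cantor set" where
  "cyl \<sigma> = {X. \<forall>i < length \<sigma>. X i = \<sigma> ! i}"

definition open_cantor :: "cantor set \<Rightarrow> bool" where
  "open_cantor V \<longleftrightarrow> V = (\<Union>{cyl \<sigma> | \<sigma>. cyl \<sigma> \<subseteq> V})"

definition str_code :: "bool list \<Rightarrow> nat" where
  "str_code \<sigma> = list_encode (map of_bool \<sigma>)"

definition lambdaC :: "cantor measure" where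
  "lambdaC = PiM UNIV (\<lambda>_. measure_pmf (pmf_of_set (UNIV :: bool set)))"

definition mltest :: "(nat \<Rightarrow> cantor set) \<Rightarrow> bool" where
  "mltest V \<longleftrightarrow> (\<forall>i. open_cantor (V i))
     \<and> ce {prod_encode (i, str_code \<sigma>) | i \<sigma>. cyl \<sigma> \<subseteq> V i}
     \<and> (\<forall>i. measure lambdaC (V i) \<le> (1/2) ^ i)"

definition universal_mltest :: "(nat \<Rightarrow> cantor set) \<Rightarrow> bool" where
  "universal_mltest U \<longleftrightarrow> mltest U \<and> (\<forall>V. mltest V \<longrightarrow> (\<Inter>i. V i) \<subseteq> (\<Inter>i. U i))"

definition MLR :: "cantor set" where
  "MLR = {X. \<forall>V. mltest V \<longrightarrow> X \<notin> (\<Inter>i. V i)}"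

definition LAY :: "(nat \<Rightarrow> cantor set) \<Rightarrow> cantor \<Rightarrow> nat set" where
  "LAY U X = {i. X \<notin> U i}"

text \<open>Representation of MLR: identity on MLR \<subseteq> 2^omega \<subseteq> omega^omega.\<close>
definition delta_MLR :: "(nat \<Rightarrow> nat) \<Rightarrow> cantor option" where
  "delta_MLR p = (if (\<forall>n. p n \<le> 1) \<and> (\<lambda>n. p n = 1) \<in> MLR then Some (\<lambda>n. p n = 1) else None)"

definition chi :: "nat \<Rightarrow> nat \<Rightarrow> nat" where
  "chi n = (\<lambda>k. if k = n then 1 else 0)"

definition delta_nat :: "(nat \<Rightarrow> nat) \<Rightarrow> nat option" where
  "delta_nat q = (if \<exists>n. q = chi n then Some (THE n. q = chi n) else None)"

text \<open>Gamma realizes the multi-valued partial f (domain = points with nonempty value set).\<close>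
definition realizes ::
  "((nat \<Rightarrow> nat) \<Rightarrow> 'a option) \<Rightarrow> ((nat \<Rightarrow> nat) \<Rightarrow> 'b option) \<Rightarrow> ('a \<Rightarrow> 'b set)
   \<Rightarrow> ((nat \<Rightarrow> nat) \<Rightarrow> (nat \<Rightarrow> nat) option) \<Rightarrow> bool" where
  "realizes dX dY f \<Gamma> \<longleftrightarrow>
     (\<forall>p x. dX p = Some x \<and> f x \<noteq> {} \<longrightarrow> (\<exists>q y. \<Gamma> p = Some q \<and> dY q = Some y \<and> y \<in> f x))"

definition sW_le ::
  "((nat \<Rightarrow> nat) \<Rightarrow> 'a option) \<Rightarrow> ((nat \<Rightarrow> nat) \<Rightarrow> 'b option) \<Rightarrow> ('a \<Rightarrow> 'b set)
   \<Rightarrow> ((nat \<Rightarrow> nat) \<Rightarrow> 'c option) \<Rightarrow> ((nat \<Rightarrow> nat) \<Rightarrow> 'd option) \<Rightarrow> ('c \<Rightarrow> 'd set) \<Rightarrow> bool" where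
  "sW_le dX dY f dX' dY' g \<longleftrightarrow> (\<exists>\<Phi> \<Psi>. turing_functional \<Phi> \<and> turing_functional \<Psi> \<and>
     (\<forall>\<Gamma>. realizes dX' dY' g \<Gamma> \<longrightarrow> realizes dX dY f (\<lambda>p. Option.bind (Option.bind (\<Phi> p) \<Gamma>) \<Psi>)))"

end

(*
  Given a random X, compute Y bit by bit: copy X, except that the output is frozen to 0 as long as
  some level V_j is seen to contain X while U_j is not yet seen to contain the part of Y produced
  so far. If X is in V_j, then Y eventually enters U_j: otherwise Y would end in zeros, and every
  sequence with finite support lies in every level of a universal test. A random X lies in only
  finitely many V_j (the tails of an ML-test again form an ML-test), so from some point on Y
  copies X; hence Y differs from X in finitely many bits and is random. Thus any index j with
  Y not in U_j also has X not in V_j, and the realizer for LAY_U can be reused unchanged.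
*)

theory Submission
  imports Defs
begin

section \<open>Computation relative to an oracle\<close>

inductive_cases ev_ZrE: "eval p Zr xs y"
inductive_cases ev_ScE: "eval p Sc xs y"
inductive_cases ev_ProjE: "eval p (Proj i) xs y"
inductive_cases ev_CompE: "eval p (Comp g hs) xs y"
inductive_cases ev_PrimE: "eval p (Prim g h) xs y"
inductive_cases ev_MnE: "eval p (Mn g) xs y"
inductive_cases ev_OrcE: "eval p Orc xs y"

lemma eval_det:
  assumes "eval p e xs y" "eval p e xs y'" shows "y' = y"
  using assms
proof (induction arbitrary: y' rule: eval.induct)
  case (ev_Z xs) then show ?case by (rule ev_ZrE) simp
next
  case (ev_S x xs) then show ?case by (rule ev_ScE) simp
next
  case (ev_Proj i xs) from ev_Proj.prems show ?case by (rule ev_ProjE) simp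
next
  case (ev_Orc x xs) then show ?case by (rule ev_OrcE) simp
next
  case (ev_Comp ys hs xs g z)
  from ev_Comp.prems obtain ys' where ys': "length ys' = length hs"
    "\<forall>k<length hs. eval p (hs ! k) xs (ys' ! k)" "eval p g ys' y'"
    by (rule ev_CompE) blast
  have "\<forall>k<length hs. ys' ! k = ys ! k"
  proof (intro allI impI)
    fix k assume k: "k < length hs"
    then have "eval p (hs ! k) xs (ys' ! k)" using ys' by blast
    with k ev_Comp.IH(1) show "ys' ! k = ys ! k" by blast
  qed
  then have "ys' = ys" using ys'(1) ev_Comp.hyps(1) by (simp add: nth_equalityI)
  then show ?case using ev_Comp.IH(2) ys'(3) by blast
next
  case (ev_Prim0 g xs y h)
  from ev_Prim0.prems show ?case
    by (rule ev_PrimE) (use ev_Prim0.IH in auto)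
next
  case (ev_PrimS g h n xs y z)
  from ev_PrimS.prems obtain y1 where "eval p (Prim g h) (n # xs) y1" "eval p h (y1 # n # xs) y'"
    by (rule ev_PrimE) auto
  then have "y1 = y" using ev_PrimS.IH(1) by blast
  then show ?case using ev_PrimS.IH(2) \<open>eval p h (y1 # n # xs) y'\<close> by blast
next
  case (ev_Mn g n xs)
  from ev_Mn.prems obtain n' where n': "y' = n'" "eval p g (n' # xs) 0"
     "\<forall>m<n'. \<exists>y. y \<noteq> 0 \<and> eval p g (m # xs) y"
    by (rule ev_MnE) blast
  show ?case
  proof (rule ccontr)
    assume "y' \<noteq> n"
    then consider "n' < n" | "n < n'" using n' by linarith
    then show False
    proof cases
      case 1 then obtain y where "y \<noteq> 0" "\<forall>y'. eval p g (n' # xs) y' \<longrightarrow> y' = y"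
        using ev_Mn.IH(2) by blast
      then show False using n'(2) by blast
    next
      case 2 then obtain y where "y \<noteq> 0" "eval p g (n # xs) y" using n' by blast
      then show False using ev_Mn.IH(1) by blast
    qed
  qed
qed

definition rec_fn :: "nat \<Rightarrow> ((nat \<Rightarrow> nat) \<Rightarrow> nat list \<Rightarrow> nat) \<Rightarrow> bool" where
  "rec_fn k f \<longleftrightarrow> (\<exists>e. \<forall>p xs. length xs = k \<longrightarrow> eval p e xs (f p xs))"

lemma rf_cong: "rec_fn k f \<Longrightarrow> (\<And>p xs. length xs = k \<Longrightarrow> f p xs = g p xs) \<Longrightarrow> rec_fn k g"
  unfolding rec_fn_def by metis

lemma rf_zero: "rec_fn k (\<lambda>p xs. 0)"
  unfolding rec_fn_def by (auto intro: ev_Z)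

lemma rf_Suc: "rec_fn k f \<Longrightarrow> rec_fn k (\<lambda>p xs. Suc (f p xs))"
proof -
  assume "rec_fn k f"
  then obtain e where e: "\<And>p xs. length xs = k \<Longrightarrow> eval p e xs (f p xs)" unfolding rec_fn_def by blast
  have "eval p (Comp Sc [e]) xs (Suc (f p xs))" if "length xs = k" for p xs
    using e[OF that] by (auto intro!: ev_Comp[where ys="[_]"] ev_S)
  then show ?thesis unfolding rec_fn_def by blast
qed

lemma rf_const: "rec_fn k (\<lambda>p xs. c)"
  by (induction c) (auto intro: rf_zero rf_Suc)

lemma rf_nth: "i < k \<Longrightarrow> rec_fn k (\<lambda>p xs. xs ! i)"
  unfolding rec_fn_def by (auto intro!: exI[of _ "Proj i"] ev_Proj)

lemma rf_orc: "rec_fn k f \<Longrightarrow> rec_fn k (\<lambda>p xs. p (f p xs))"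
proof -
  assume "rec_fn k f"
  then obtain e where e: "\<And>p xs. length xs = k \<Longrightarrow> eval p e xs (f p xs)" unfolding rec_fn_def by blast
  have "eval p (Comp Orc [e]) xs (p (f p xs))" if "length xs = k" for p xs
    using e[OF that] by (auto intro!: ev_Comp[where ys="[_]"] ev_Orc)
  then show ?thesis unfolding rec_fn_def by blast
qed

lemma rf_comp:
  assumes g: "rec_fn m g" and fs: "length fs = m" "\<And>j. j < m \<Longrightarrow> rec_fn k (fs ! j)"
  shows "rec_fn k (\<lambda>p xs. g p (map (\<lambda>f. f p xs) fs))"
proof -
  obtain eg where eg: "\<forall>p xs. length xs = m \<longrightarrow> eval p eg xs (g p xs)" using g unfolding rec_fn_def by blast
  have "\<forall>j<m. \<exists>e. \<forall>p xs. length xs = k \<longrightarrow> eval p e xs ((fs!j) p xs)" using fs unfolding rec_fn_def by blast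
  then obtain E where E: "\<And>j. j < m \<Longrightarrow> \<forall>p xs. length xs = k \<longrightarrow> eval p (E j) xs ((fs!j) p xs)"
    by metis
  have "eval p (Comp eg (map E [0..<m])) xs (g p (map (\<lambda>f. f p xs) fs))" if "length xs = k" for p xs
    by (rule ev_Comp[where ys="map (\<lambda>f. f p xs) fs"]) (use fs E eg that in auto)
  then show ?thesis unfolding rec_fn_def by blast
qed

fun prim_rec :: "nat \<Rightarrow> (nat \<Rightarrow> nat \<Rightarrow> nat) \<Rightarrow> nat \<Rightarrow> nat" where
  "prim_rec a h 0 = a"
| "prim_rec a h (Suc n) = h (prim_rec a h n) n"

lemma rf_prim_rec_hd:
  assumes a: "rec_fn k a" and h: "rec_fn (Suc (Suc k)) h"
  shows "rec_fn (Suc k) (\<lambda>p xs. prim_rec (a p (tl xs)) (\<lambda>y n. h p (y # n # tl xs)) (hd xs))"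
proof -
  obtain ea where ea: "\<forall>p xs. length xs = k \<longrightarrow> eval p ea xs (a p xs)" using a unfolding rec_fn_def by blast
  obtain eh where eh: "\<forall>p xs. length xs = Suc (Suc k) \<longrightarrow> eval p eh xs (h p xs)" using h unfolding rec_fn_def by blast
  have *: "length xs = k \<Longrightarrow> eval p (Prim ea eh) (n # xs) (prim_rec (a p xs) (\<lambda>y n. h p (y # n # xs)) n)" for p xs n
  proof (induction n)
    case 0 then show ?case by (auto intro: ev_Prim0 ea[rule_format])
  next
    case (Suc n) then show ?case by (auto intro!: ev_PrimS eh[rule_format])
  qed
  have "eval p (Prim ea eh) xs (prim_rec (a p (tl xs)) (\<lambda>y n. h p (y # n # tl xs)) (hd xs))"
    if "length xs = Suc k" for p xs
    using *[of "tl xs" p "hd xs"] that by (cases xs) auto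
  then show ?thesis unfolding rec_fn_def by blast
qed

lemma rf_prim_rec:
  assumes a: "rec_fn k a" and h: "rec_fn (Suc (Suc k)) h" and c: "rec_fn k c"
  shows "rec_fn k (\<lambda>p xs. prim_rec (a p xs) (\<lambda>y n. h p (y # n # xs)) (c p xs))"
proof -
  have "rec_fn k (\<lambda>p xs. (\<lambda>p xs. prim_rec (a p (tl xs)) (\<lambda>y n. h p (y # n # tl xs)) (hd xs)) p
      (map (\<lambda>f. f p xs) (c # map (\<lambda>i p xs. xs ! i) [0..<k])))"
    by (rule rf_comp[OF rf_prim_rec_hd[OF a h]]) (auto simp: nth_Cons' c rf_nth)
  then show ?thesis
    by (rule rf_cong) (simp add: o_def, metis map_nth)
qed

lemma rf_subst:
  assumes g: "rec_fn m g" and F: "\<And>j. j < m \<Longrightarrow> rec_fn k (F j)"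
  shows "rec_fn k (\<lambda>p xs. g p (map (\<lambda>j. F j p xs) [0..<m]))"
proof -
  have "rec_fn k (\<lambda>p xs. g p (map (\<lambda>f. f p xs) (map F [0..<m])))"
    by (rule rf_comp[OF g]) (auto simp: F)
  then show ?thesis by (simp add: o_def)
qed

lemma rf_drop: assumes "rec_fn k f" shows "rec_fn (m + k) (\<lambda>p ys. f p (drop m ys))"
proof -
  have "rec_fn (m + k) (\<lambda>p ys. f p (map (\<lambda>j. (\<lambda>p ys. ys ! (m + j)) p ys) [0..<k]))"
    by (rule rf_subst[OF assms]) (auto intro: rf_nth)
  then show ?thesis
  proof (rule rf_cong)
    fix p and ys :: "nat list" assume "length ys = m + k"
    then have "map (\<lambda>j. ys ! (m + j)) [0..<k] = drop m ys"
      by (intro nth_equalityI) auto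
    then show "f p (map (\<lambda>j. ys ! (m + j)) [0..<k]) = f p (drop m ys)" by simp
  qed
qed

lemma rf_add: "rec_fn k f \<Longrightarrow> rec_fn k g \<Longrightarrow> rec_fn k (\<lambda>p xs. f p xs + g p xs)"
proof -
  assume f: "rec_fn k f" and g: "rec_fn k g"
  have *: "prim_rec a (\<lambda>y n. Suc y) b = a + b" for a b by (induction b) auto
  have "rec_fn k (\<lambda>p xs. prim_rec (f p xs) (\<lambda>y n. (\<lambda>p ys. Suc (ys ! 0)) p (y # n # xs)) (g p xs))"
    by (rule rf_prim_rec[OF f _ g]) (auto intro: rf_Suc rf_nth)
  then show ?thesis by (simp add: *)
qed

lemma rf_pred: "rec_fn k f \<Longrightarrow> rec_fn k (\<lambda>p xs. f p xs - 1)"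
proof -
  assume f: "rec_fn k f"
  have *: "prim_rec 0 (\<lambda>y n. n) b = b - 1" for b by (induction b) auto
  have "rec_fn k (\<lambda>p xs. prim_rec ((\<lambda>p xs. 0) p xs) (\<lambda>y n. (\<lambda>p ys. ys ! 1) p (y # n # xs)) (f p xs))"
    by (rule rf_prim_rec[OF rf_zero _ f]) (auto intro: rf_nth)
  then show ?thesis by (simp add: *)
qed

lemma rf_sub: "rec_fn k f \<Longrightarrow> rec_fn k g \<Longrightarrow> rec_fn k (\<lambda>p xs. f p xs - g p xs)"
proof -
  assume f: "rec_fn k f" and g: "rec_fn k g"
  have *: "prim_rec a (\<lambda>y n. y - Suc 0) b = a - b" for a b by (induction b) auto
  have "rec_fn k (\<lambda>p xs. prim_rec (f p xs) (\<lambda>y n. (\<lambda>p ys. ys ! 0 - 1) p (y # n # xs)) (g p xs))"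
    by (rule rf_prim_rec[OF f _ g]) (rule rf_pred[OF rf_nth], simp)
  then show ?thesis by (simp add: *)
qed

lemma rf_mult: "rec_fn k f \<Longrightarrow> rec_fn k g \<Longrightarrow> rec_fn k (\<lambda>p xs. f p xs * g p xs)"
proof -
  assume f: "rec_fn k f" and g: "rec_fn k g"
  have *: "prim_rec 0 (\<lambda>y n. y + a) b = a * b" for a b by (induction b) auto
  have "rec_fn k (\<lambda>p xs. prim_rec ((\<lambda>p xs. 0) p xs) (\<lambda>y n. (\<lambda>p ys. ys ! 0 + f p (drop 2 ys)) p (y # n # xs)) (g p xs))"
    apply (rule rf_prim_rec[OF rf_zero _ g])
    apply (rule rf_add)
     apply (rule rf_nth, simp)
    using rf_drop[OF f, of 2] by simp
  then show ?thesis by (simp add: * mult.commute)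
qed

lemma rf_sum: assumes F: "rec_fn (Suc k) F" and b: "rec_fn k b"
  shows "rec_fn k (\<lambda>p xs. \<Sum>i<b p xs. F p (i # xs))"
proof -
  have *: "prim_rec 0 (\<lambda>y n. y + G n) c = (\<Sum>i<c. G i)" for G c by (induction c) auto
  have "rec_fn k (\<lambda>p xs. prim_rec ((\<lambda>p xs. 0) p xs)
      (\<lambda>y n. (\<lambda>p ys. ys ! 0 + F p (drop 1 ys)) p (y # n # xs)) (b p xs))"
    apply (rule rf_prim_rec[OF rf_zero _ b])
    apply (rule rf_add)
     apply (rule rf_nth, simp)
    using rf_drop[OF F, of 1] by simp
  then show ?thesis by (simp add: *)
qed

definition rec_pred :: "nat \<Rightarrow> ((nat \<Rightarrow> nat) \<Rightarrow> nat list \<Rightarrow> bool) \<Rightarrow> bool" where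
  "rec_pred k P \<longleftrightarrow> rec_fn k (\<lambda>p xs. of_bool (P p xs))"

lemma rp_cong: "rec_pred k P \<Longrightarrow> (\<And>p xs. length xs = k \<Longrightarrow> P p xs = Q p xs) \<Longrightarrow> rec_pred k Q"
  unfolding rec_pred_def by (erule rf_cong) simp

lemma rp_nz: "rec_fn k f \<Longrightarrow> rec_pred k (\<lambda>p xs. f p xs \<noteq> 0)"
proof -
  assume f: "rec_fn k f"
  have "rec_fn k (\<lambda>p xs. 1 - (1 - f p xs))" by (intro rf_sub rf_const f)
  then show ?thesis unfolding rec_pred_def by (rule rf_cong) auto
qed

lemma rp_not: "rec_pred k P \<Longrightarrow> rec_pred k (\<lambda>p xs. \<not> P p xs)"
proof -
  assume P: "rec_pred k P"
  have "rec_fn k (\<lambda>p xs. 1 - of_bool (P p xs))" by (intro rf_sub rf_const P[unfolded rec_pred_def])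
  then show ?thesis unfolding rec_pred_def by (rule rf_cong) auto
qed

lemma rp_and: "rec_pred k P \<Longrightarrow> rec_pred k Q \<Longrightarrow> rec_pred k (\<lambda>p xs. P p xs \<and> Q p xs)"
proof -
  assume P: "rec_pred k P" and Q: "rec_pred k Q"
  have "rec_fn k (\<lambda>p xs. of_bool (P p xs) * of_bool (Q p xs))"
    by (intro rf_mult P[unfolded rec_pred_def] Q[unfolded rec_pred_def])
  then show ?thesis unfolding rec_pred_def by (rule rf_cong) auto
qed

lemma rp_or: "rec_pred k P \<Longrightarrow> rec_pred k Q \<Longrightarrow> rec_pred k (\<lambda>p xs. P p xs \<or> Q p xs)"
proof -
  assume "rec_pred k P" "rec_pred k Q"
  then have "rec_pred k (\<lambda>p xs. \<not> (\<not> P p xs \<and> \<not> Q p xs))" by (intro rp_not rp_and)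
  then show ?thesis by simp
qed

lemma rp_imp: "rec_pred k P \<Longrightarrow> rec_pred k Q \<Longrightarrow> rec_pred k (\<lambda>p xs. P p xs \<longrightarrow> Q p xs)"
proof -
  assume "rec_pred k P" "rec_pred k Q"
  then have "rec_pred k (\<lambda>p xs. \<not> P p xs \<or> Q p xs)" by (intro rp_not rp_or)
  then show ?thesis by simp
qed

lemma rp_le: "rec_fn k f \<Longrightarrow> rec_fn k g \<Longrightarrow> rec_pred k (\<lambda>p xs. f p xs \<le> g p xs)"
proof -
  assume "rec_fn k f" "rec_fn k g"
  then have "rec_pred k (\<lambda>p xs. \<not> (f p xs - g p xs \<noteq> 0))" by (intro rp_not rp_nz rf_sub)
  then show ?thesis by (rule rp_cong) auto
qed

lemma rp_less: "rec_fn k f \<Longrightarrow> rec_fn k g \<Longrightarrow> rec_pred k (\<lambda>p xs. f p xs < g p xs)"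
proof -
  assume "rec_fn k f" "rec_fn k g"
  then have "rec_pred k (\<lambda>p xs. g p xs - f p xs \<noteq> 0)" by (intro rp_nz rf_sub)
  then show ?thesis by (rule rp_cong) auto
qed

lemma rp_eq: "rec_fn k f \<Longrightarrow> rec_fn k g \<Longrightarrow> rec_pred k (\<lambda>p xs. f p xs = g p xs)"
proof -
  assume "rec_fn k f" "rec_fn k g"
  then have "rec_pred k (\<lambda>p xs. f p xs \<le> g p xs \<and> g p xs \<le> f p xs)" by (intro rp_and rp_le)
  then show ?thesis by (rule rp_cong) auto
qed

lemma rp_iff: "rec_pred k P \<Longrightarrow> rec_pred k Q \<Longrightarrow> rec_pred k (\<lambda>p xs. P p xs = Q p xs)"
proof -
  assume "rec_pred k P" "rec_pred k Q"
  then have "rec_pred k (\<lambda>p xs. (P p xs \<longrightarrow> Q p xs) \<and> (Q p xs \<longrightarrow> P p xs))" by (intro rp_and rp_imp)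
  then show ?thesis by (rule rp_cong) auto
qed

lemma rf_if: "rec_pred k P \<Longrightarrow> rec_fn k f \<Longrightarrow> rec_fn k g \<Longrightarrow>
   rec_fn k (\<lambda>p xs. if P p xs then f p xs else g p xs)"
proof -
  assume P: "rec_pred k P" and f: "rec_fn k f" and g: "rec_fn k g"
  have "rec_fn k (\<lambda>p xs. of_bool (P p xs) * f p xs + of_bool (\<not> P p xs) * g p xs)"
    using P rp_not[OF P] f g unfolding rec_pred_def by (intro rf_add rf_mult)
  then show ?thesis by (rule rf_cong) auto
qed

lemma rf_of_bool: "rec_pred k P \<Longrightarrow> rec_fn k (\<lambda>p xs. of_bool (P p xs))"
  unfolding rec_pred_def .

lemma rp_bex: assumes P: "rec_pred (Suc k) P" and b: "rec_fn k b"
  shows "rec_pred k (\<lambda>p xs. \<exists>i<b p xs. P p (i # xs))"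
proof -
  have "rec_pred k (\<lambda>p xs. (\<Sum>i<b p xs. of_bool (P p (i # xs))) \<noteq> (0::nat))"
    by (intro rp_nz rf_sum b P[unfolded rec_pred_def])
  then show ?thesis by (rule rp_cong) auto
qed

lemma rp_ball: assumes P: "rec_pred (Suc k) P" and b: "rec_fn k b"
  shows "rec_pred k (\<lambda>p xs. \<forall>i<b p xs. P p (i # xs))"
proof -
  have "rec_pred k (\<lambda>p xs. \<not> (\<exists>i<b p xs. \<not> P p (i # xs)))"
    by (intro rp_not rp_bex rp_not P b)
  then show ?thesis by simp
qed

lemma rp_subst:
  assumes g: "rec_pred m g" and F: "\<And>j. j < m \<Longrightarrow> rec_fn k (F j)"
  shows "rec_pred k (\<lambda>p xs. g p (map (\<lambda>j. F j p xs) [0..<m]))"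
  using rf_subst[OF g[unfolded rec_pred_def] F] unfolding rec_pred_def .

lemma rf_pow2: "rec_fn k f \<Longrightarrow> rec_fn k (\<lambda>p xs. 2 ^ f p xs)"
proof -
  assume f: "rec_fn k f"
  have *: "prim_rec (Suc 0) (\<lambda>y n. y + y) b = 2 ^ b" for b by (induction b) auto
  have "rec_fn k (\<lambda>p xs. prim_rec ((\<lambda>p xs. 1) p xs) (\<lambda>y n. (\<lambda>p ys. ys ! 0 + ys ! 0) p (y # n # xs)) (f p xs))"
    by (rule rf_prim_rec[OF rf_const _ f]) (auto intro!: rf_add rf_nth)
  then show ?thesis by (simp add: *)
qed

lemma rf_half: "rec_fn k f \<Longrightarrow> rec_fn k (\<lambda>p xs. f p xs div 2)"
proof -
  assume f: "rec_fn k f"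
  have *: "(\<Sum>i<b. of_bool (2 * Suc i \<le> b) :: nat) = b div 2" for b
  proof -
    have "(\<Sum>i<b. of_bool (2 * Suc i \<le> b) :: nat) = card {i. i < b \<and> 2 * Suc i \<le> b}"
      by (simp add: sum.If_cases Int_def)
    also have "{i. i < b \<and> 2 * Suc i \<le> b} = {..<b div 2}" by auto
    finally show ?thesis by simp
  qed
  have "rec_pred (Suc k) (\<lambda>p ys. 2 * Suc (ys ! 0) \<le> f p (drop 1 ys))"
    using rf_drop[OF f, of 1] by (intro rp_le rf_mult rf_const rf_Suc rf_nth) simp_all
  from rf_sum[OF this[unfolded rec_pred_def] f]
  have "rec_fn k (\<lambda>p xs. \<Sum>i<f p xs. of_bool (2 * Suc i \<le> f p xs))" by simp
  then show ?thesis by (simp only: *)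
qed

lemma rf_shiftr: "rec_fn k f \<Longrightarrow> rec_fn k g \<Longrightarrow> rec_fn k (\<lambda>p xs. f p xs div 2 ^ g p xs)"
proof -
  assume f: "rec_fn k f" and g: "rec_fn k g"
  have *: "prim_rec a (\<lambda>y n. y div 2) b = a div 2 ^ b" for a b
    by (induction b) (simp_all del: power_Suc add: power_Suc2 div_mult2_eq)
  have "rec_fn k (\<lambda>p xs. prim_rec (f p xs) (\<lambda>y n. (\<lambda>p ys. ys ! 0 div 2) p (y # n # xs)) (g p xs))"
    by (rule rf_prim_rec[OF f _ g]) (auto intro!: rf_half rf_nth)
  then show ?thesis by (simp add: *)
qed

lemma rp_odd: "rec_fn k f \<Longrightarrow> rec_pred k (\<lambda>p xs. odd (f p xs))"
proof -
  assume f: "rec_fn k f"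
  have "rec_pred k (\<lambda>p xs. f p xs - 2 * (f p xs div 2) \<noteq> 0)"
    by (intro rp_nz rf_sub f rf_mult rf_const rf_half)
  moreover have "x - 2 * (x div 2) = x mod 2" for x :: nat by (simp add: minus_mult_div_eq_mod)
  ultimately show ?thesis by (simp add: even_iff_mod_2_eq_zero)
qed

lemma rp_bit: "rec_fn k f \<Longrightarrow> rec_fn k g \<Longrightarrow> rec_pred k (\<lambda>p xs. odd (f p xs div 2 ^ g p xs))"
  by (intro rp_odd rf_shiftr)

lemma rf_triangle: "rec_fn k f \<Longrightarrow> rec_fn k (\<lambda>p xs. triangle (f p xs))"
proof -
  assume f: "rec_fn k f"
  have *: "(\<Sum>i<Suc b. i) = triangle b" for b by (induction b) auto
  have "rec_fn k (\<lambda>p xs. \<Sum>i<Suc (f p xs). (\<lambda>p ys. ys ! 0) p (i # xs))"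
    by (rule rf_sum) (auto intro: rf_nth rf_Suc f)
  then show ?thesis by (simp only: * nth_Cons_0)
qed

lemma rf_prod_encode: "rec_fn k f \<Longrightarrow> rec_fn k g \<Longrightarrow> rec_fn k (\<lambda>p xs. prod_encode (f p xs, g p xs))"
  unfolding prod_encode_def by (simp, intro rf_add rf_triangle)

lemma rf_reindex:
  assumes g: "rec_fn m g" and idx: "\<And>j. j < m \<Longrightarrow> idx j < k"
  shows "rec_fn k (\<lambda>p ys. g p (map (\<lambda>j. ys ! idx j) [0..<m]))"
  using rf_subst[OF g, of k "\<lambda>j p ys. ys ! idx j"] idx by (auto intro: rf_nth)

lemma rf_prod_fin: "(\<And>j. j < (m::nat) \<Longrightarrow> rec_fn k (F j)) \<Longrightarrow> rec_fn k (\<lambda>p xs. \<Prod>j<m. F j p xs)"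
proof (induction m)
  case 0 then show ?case by (simp add: rf_const)
next
  case (Suc m) then show ?case by (simp, intro rf_mult) auto
qed

lemma rf_app2:
  assumes R: "rec_fn 2 (\<lambda>p xs. R (xs ! 0) (xs ! 1))" and f: "rec_fn k f" and g: "rec_fn k g"
  shows "rec_fn k (\<lambda>p xs. R (f p xs) (g p xs))"
proof -
  have "rec_fn k (\<lambda>p xs. (\<lambda>p xs. R (xs ! 0) (xs ! 1)) p (map (\<lambda>j. ([f, g] ! j) p xs) [0..<2]))"
    by (rule rf_subst[OF R]) (use f g in \<open>auto simp: less_2_cases_iff\<close>)
  then show ?thesis by (simp add: numeral_2_eq_2)
qed

lemma rp_app4:
  assumes P: "rec_pred 4 (\<lambda>p xs. P (xs ! 0) (xs ! 1) (xs ! 2) (xs ! 3))"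
    and f: "rec_fn k f0" "rec_fn k f1" "rec_fn k f2" "rec_fn k f3"
  shows "rec_pred k (\<lambda>p xs. P (f0 p xs) (f1 p xs) (f2 p xs) (f3 p xs))"
proof -
  have "rec_pred k (\<lambda>p xs. (\<lambda>p xs. P (xs ! 0) (xs ! 1) (xs ! 2) (xs ! 3)) p
      (map (\<lambda>j. ([f0, f1, f2, f3] ! j) p xs) [0..<4]))"
    by (rule rp_subst[OF P]) (use f in \<open>auto simp: nth_Cons'\<close>)
  then show ?thesis by (simp add: eval_nat_numeral upt_rec)
qed

lemma fst_prod_decode_eq_sum: "(\<Sum>a<Suc w. a * of_bool (\<exists>b<Suc w. prod_encode (a, b) = w)) = fst (prod_decode w)"
proof -
  obtain a0 b0 where d: "prod_decode w = (a0, b0)" by (cases "prod_decode w")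
  then have w: "w = prod_encode (a0, b0)" by (metis prod_decode_inverse)
  have "a0 \<le> w" "b0 \<le> w" using w le_prod_encode_1 le_prod_encode_2 by auto
  have "(\<Sum>a<Suc w. a * of_bool (\<exists>b<Suc w. prod_encode (a, b) = w)) = (\<Sum>a<Suc w. if a = a0 then a else 0)"
    by (rule sum.cong) (use \<open>b0 \<le> w\<close> in \<open>auto simp: w\<close>)
  also have "\<dots> = a0" using \<open>a0 \<le> w\<close> by (simp add: sum.delta)
  finally show ?thesis using d by simp
qed

lemma snd_prod_decode_eq_sum: "(\<Sum>b<Suc w. b * of_bool (\<exists>a<Suc w. prod_encode (a, b) = w)) = snd (prod_decode w)"
proof -
  obtain a0 b0 where d: "prod_decode w = (a0, b0)" by (cases "prod_decode w")
  then have w: "w = prod_encode (a0, b0)" by (metis prod_decode_inverse)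
  have "a0 \<le> w" "b0 \<le> w" using w le_prod_encode_1 le_prod_encode_2 by auto
  have "(\<Sum>b<Suc w. b * of_bool (\<exists>a<Suc w. prod_encode (a, b) = w)) = (\<Sum>b<Suc w. if b = b0 then b else 0)"
    by (rule sum.cong) (use \<open>a0 \<le> w\<close> in \<open>auto simp: w\<close>)
  also have "\<dots> = b0" using \<open>b0 \<le> w\<close> by (simp add: sum.delta)
  finally show ?thesis using d by simp
qed

lemma rf_unpair1: assumes f: "rec_fn k f" shows "rec_fn k (\<lambda>p xs. fst (prod_decode (f p xs)))"
proof -
  have f2: "rec_fn (2 + k) (\<lambda>p ys. f p (drop 2 ys))" by (rule rf_drop[OF f])
  have f1: "rec_fn (1 + k) (\<lambda>p ys. f p (drop 1 ys))" by (rule rf_drop[OF f])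
  have "rec_pred (Suc k) (\<lambda>p ys. \<exists>b<Suc (f p (drop 1 ys)).
      (\<lambda>p zs. prod_encode (zs ! 1, zs ! 0) = f p (drop 2 zs)) p (b # ys))"
    by (rule rp_bex) (use f1 f2 in \<open>auto intro!: rp_eq rf_prod_encode rf_nth rf_Suc\<close>)
  then have P: "rec_pred (Suc k) (\<lambda>p ys. \<exists>b<Suc (f p (drop 1 ys)). prod_encode (ys ! 0, b) = f p (drop 1 ys))"
    by simp
  have "rec_fn k (\<lambda>p xs. \<Sum>a<Suc (f p xs). (\<lambda>p ys. ys ! 0 * of_bool (\<exists>b<Suc (f p (drop 1 ys)). prod_encode (ys ! 0, b) = f p (drop 1 ys))) p (a # xs))"
    by (rule rf_sum) (use P f in \<open>auto intro!: rf_mult rf_nth rf_Suc simp: rec_pred_def\<close>)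
  then show ?thesis by (simp only: One_nat_def nth_Cons_0 drop_Suc_Cons drop_0 fst_prod_decode_eq_sum)
qed

lemma rf_unpair2: assumes f: "rec_fn k f" shows "rec_fn k (\<lambda>p xs. snd (prod_decode (f p xs)))"
proof -
  have f2: "rec_fn (2 + k) (\<lambda>p ys. f p (drop 2 ys))" by (rule rf_drop[OF f])
  have f1: "rec_fn (1 + k) (\<lambda>p ys. f p (drop 1 ys))" by (rule rf_drop[OF f])
  have "rec_pred (Suc k) (\<lambda>p ys. \<exists>a<Suc (f p (drop 1 ys)).
      (\<lambda>p zs. prod_encode (zs ! 0, zs ! 1) = f p (drop 2 zs)) p (a # ys))"
    by (rule rp_bex) (use f1 f2 in \<open>auto intro!: rp_eq rf_prod_encode rf_nth rf_Suc\<close>)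
  then have P: "rec_pred (Suc k) (\<lambda>p ys. \<exists>a<Suc (f p (drop 1 ys)). prod_encode (a, ys ! 0) = f p (drop 1 ys))"
    by simp
  have "rec_fn k (\<lambda>p xs. \<Sum>b<Suc (f p xs). (\<lambda>p ys. ys ! 0 * of_bool (\<exists>a<Suc (f p (drop 1 ys)). prod_encode (a, ys ! 0) = f p (drop 1 ys))) p (b # xs))"
    by (rule rf_sum) (use P f in \<open>auto intro!: rf_mult rf_nth rf_Suc simp: rec_pred_def\<close>)
  then show ?thesis by (simp only: One_nat_def nth_Cons_0 drop_Suc_Cons drop_0 snd_prod_decode_eq_sum)
qed

lemma prim_rec_list_encode: "d \<le> n \<Longrightarrow> prim_rec 0 (\<lambda>acc d. Suc (prod_encode (G (n - Suc d), acc))) d = list_encode (map G [n - d..<n])"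
proof (induction d)
  case 0 then show ?case by simp
next
  case (Suc d)
  then have "[n - Suc d..<n] = (n - Suc d) # [n - d..<n]"
  proof -
    have "n - Suc d < n" "Suc (n - Suc d) = n - d" using Suc.prems by auto
    then show ?thesis using upt_conv_Cons by metis
  qed
  then show ?case using Suc by simp
qed

lemma rf_list_encode:
  assumes F: "rec_fn (Suc k) F" and L: "rec_fn k L"
  shows "rec_fn k (\<lambda>p xs. list_encode (map (\<lambda>i. F p (i # xs)) [0..<L p xs]))"
proof -
  define A where "A j = (if j = 0 then (\<lambda>(p::nat\<Rightarrow>nat) (ys::nat list). L p (drop 2 ys) - Suc (ys ! 1))
      else (\<lambda>p ys. ys ! Suc j))" for j :: nat
  have L2: "rec_fn (2 + k) (\<lambda>p ys. L p (drop 2 ys))" by (rule rf_drop[OF L])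
  have A: "rec_fn (Suc (Suc k)) (A j)" if "j < Suc k" for j
  proof (cases "j = 0")
    case True
    have "rec_fn (Suc (Suc k)) (\<lambda>p ys. L p (drop 2 ys) - Suc (ys ! 1))"
      using L2 by (intro rf_sub rf_Suc rf_nth) auto
    then show ?thesis using True by (simp add: A_def)
  next
    case False
    then show ?thesis using that by (simp add: A_def rf_nth)
  qed
  have H: "rec_fn (Suc (Suc k)) (\<lambda>p ys. Suc (prod_encode (F p (map (\<lambda>j. A j p ys) [0..<Suc k]), ys ! 0)))"
    by (intro rf_Suc rf_prod_encode rf_subst[OF F A] rf_nth) auto
  have "rec_fn k (\<lambda>p xs. prim_rec ((\<lambda>p xs. 0) p xs)
     (\<lambda>y n. (\<lambda>p ys. Suc (prod_encode (F p (map (\<lambda>j. A j p ys) [0..<Suc k]), ys ! 0))) p (y # n # xs)) (L p xs))"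
    by (rule rf_prim_rec[OF rf_zero H L])
  then show ?thesis
  proof (rule rf_cong)
    fix p and xs :: "nat list" assume l: "length xs = k"
    have m: "map (\<lambda>j. A j p (y # d # xs)) [0..<Suc k] = (L p xs - Suc d) # xs" for y d
      using l by (intro nth_equalityI) (auto simp: A_def nth_Cons' simp del: upt_Suc)
    show "prim_rec ((\<lambda>p xs. 0) p xs)
     (\<lambda>y n. (\<lambda>p ys. Suc (prod_encode (F p (map (\<lambda>j. A j p ys) [0..<Suc k]), ys ! 0))) p (y # n # xs)) (L p xs)
      = list_encode (map (\<lambda>i. F p (i # xs)) [0..<L p xs])"
      unfolding m using prim_rec_list_encode[of "L p xs" "L p xs" "\<lambda>i. F p (i # xs)"] by simp
  qed
qed

section \<open>Step-bounded evaluation and c.e. sets\<close>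

fun prim_rec_opt :: "nat option \<Rightarrow> (nat \<Rightarrow> nat \<Rightarrow> nat option) \<Rightarrow> nat \<Rightarrow> nat option" where
  "prim_rec_opt a h 0 = a"
| "prim_rec_opt a h (Suc n) = (case prim_rec_opt a h n of None \<Rightarrow> None | Some y \<Rightarrow> h y n)"

text \<open>The search for the least zero of \<open>r\<close> among the first \<open>s\<close> candidates: \<open>0\<close> while still
  searching, \<open>1\<close> once an undefined value is met, \<open>m + 2\<close> when \<open>m\<close> is found.\<close>

definition mu_state :: "(nat \<Rightarrow> nat option) \<Rightarrow> nat \<Rightarrow> nat" where
  "mu_state r s = prim_rec 0 (\<lambda>st m. if st \<noteq> 0 then st else (case r m of None \<Rightarrow> 1 | Some 0 \<Rightarrow> m + 2 | Some _ \<Rightarrow> 0)) s"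

text \<open>Evaluation under the oracle \<open>\<lambda>_. 0\<close> (hence \<open>Orc\<close> yields \<open>0\<close>), with every unbounded search
  cut off after \<open>s\<close> candidates.\<close>

primrec eval_fuel :: "recf \<Rightarrow> nat \<Rightarrow> nat list \<Rightarrow> nat option" where
  "eval_fuel Zr s xs = Some 0"
| "eval_fuel Sc s xs = (case xs of [] \<Rightarrow> None | x # _ \<Rightarrow> Some (Suc x))"
| "eval_fuel (Proj i) s xs = (if i < length xs then Some (xs ! i) else None)"
| "eval_fuel (Comp g hs) s xs = (let rs = map (\<lambda>h. eval_fuel h s xs) hs in
      if None \<in> set rs then None else eval_fuel g s (map the rs))"
| "eval_fuel (Prim g h) s xs = (case xs of [] \<Rightarrow> None
      | n # ys \<Rightarrow> prim_rec_opt (eval_fuel g s ys) (\<lambda>y m. eval_fuel h s (y # m # ys)) n)"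
| "eval_fuel (Mn g) s xs = (let st = mu_state (\<lambda>m. eval_fuel g s (m # xs)) s in
      if 2 \<le> st then Some (st - 2) else None)"
| "eval_fuel Orc s xs = (case xs of [] \<Rightarrow> None | _ \<Rightarrow> Some 0)"

lemma mu_state_found:
  assumes "mu_state r s = m + 2"
  shows "m < s \<and> r m = Some 0 \<and> (\<forall>m'<m. \<exists>v. r m' = Some (Suc v))"
proof -
  have "\<forall>m. mu_state r s = m + 2 \<longrightarrow> m < s \<and> r m = Some 0 \<and> (\<forall>m'<m. \<exists>v. r m' = Some (Suc v))"
    and "mu_state r s = 0 \<longrightarrow> (\<forall>m'<s. \<exists>v. r m' = Some (Suc v))"
  proof (induction s)
    case 0
    { case 1 show ?case by (simp add: mu_state_def) next case 2 show ?case by simp }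
  next
    case (Suc s)
    { case 1 show ?case
      proof (intro allI impI)
        fix m assume m: "mu_state r (Suc s) = m + 2"
        show "m < Suc s \<and> r m = Some 0 \<and> (\<forall>m'<m. \<exists>v. r m' = Some (Suc v))"
        proof (cases "mu_state r s = 0")
          case True
          then have "mu_state r (Suc s) = (case r s of None \<Rightarrow> 1 | Some 0 \<Rightarrow> s + 2 | Some _ \<Rightarrow> 0)"
            by (simp add: mu_state_def)
          with m have "r s = Some 0" "m = s" by (auto split: option.splits nat.splits)
          then show ?thesis using Suc.IH(2) True by auto
        next
          case False
          then have "mu_state r (Suc s) = mu_state r s" by (simp add: mu_state_def)
          then have "mu_state r s = m + 2" using m by simp
          then show ?thesis using Suc.IH(1) less_SucI by blast
        qed
      qed
    next
      case 2 show ?case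
      proof
        assume z: "mu_state r (Suc s) = 0"
        then have "mu_state r s = 0" by (auto simp: mu_state_def split: if_splits)
        then have "mu_state r (Suc s) = (case r s of None \<Rightarrow> 1 | Some 0 \<Rightarrow> s + 2 | Some _ \<Rightarrow> 0)"
          by (simp add: mu_state_def)
        with z have "\<exists>v. r s = Some (Suc v)" by (auto split: option.splits nat.splits)
        then show "\<forall>m'<Suc s. \<exists>v. r m' = Some (Suc v)"
          using Suc.IH(2) \<open>mu_state r s = 0\<close> less_Suc_eq by auto
      qed
    }
  qed
  then show ?thesis using assms by blast
qed

lemma eval_fuel_sound: "eval_fuel e s xs = Some y \<Longrightarrow> eval (\<lambda>_. 0) e xs y"
proof (induction e arbitrary: xs y)
  case Zr then show ?case by (auto intro: ev_Z)
next
  case Sc then show ?case by (auto intro: ev_S split: list.splits)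
next
  case (Proj i) then show ?case by (auto intro: ev_Proj split: if_splits)
next
  case Orc then show ?case
    by (auto split: list.splits intro: ev_Orc[where p="\<lambda>_. 0", simplified])
next
  case (Comp g hs)
  let ?rs = "map (\<lambda>h. eval_fuel h s xs) hs"
  from Comp.prems have nn: "None \<notin> set ?rs" and g: "eval_fuel g s (map the ?rs) = Some y"
    by (auto simp: Let_def split: if_splits)
  show ?case
  proof (rule ev_Comp[where ys="map the ?rs"])
    show "length (map the ?rs) = length hs" by simp
    show "\<forall>k<length hs. eval (\<lambda>_. 0) (hs ! k) xs (map the ?rs ! k)"
    proof (intro allI impI)
      fix k assume k: "k < length hs"
      then have "eval_fuel (hs ! k) s xs \<noteq> None" using nn by (metis length_map nth_map nth_mem)
      then have "eval_fuel (hs ! k) s xs = Some (map the ?rs ! k)" using k by auto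
      then show "eval (\<lambda>_. 0) (hs ! k) xs (map the ?rs ! k)" using Comp.IH(2) k by auto
    qed
    show "eval (\<lambda>_. 0) g (map the ?rs) y" using Comp.IH(1) g by blast
  qed
next
  case (Prim g h)
  from Prim.prems obtain n ys where xs: "xs = n # ys"
    and v: "prim_rec_opt (eval_fuel g s ys) (\<lambda>y m. eval_fuel h s (y # m # ys)) n = Some y"
    by (auto split: list.splits)
  have "prim_rec_opt (eval_fuel g s ys) (\<lambda>y m. eval_fuel h s (y # m # ys)) n = Some y \<Longrightarrow>
     eval (\<lambda>_. 0) (Prim g h) (n # ys) y" for y
  proof (induction n arbitrary: y)
    case 0 then show ?case using Prim.IH(1) by (auto intro: ev_Prim0)
  next
    case (Suc n)
    then obtain y1 where "prim_rec_opt (eval_fuel g s ys) (\<lambda>y m. eval_fuel h s (y # m # ys)) n = Some y1"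
      "eval_fuel h s (y1 # n # ys) = Some y" by (auto split: option.splits)
    then show ?case using Suc.IH Prim.IH(2) by (auto intro: ev_PrimS)
  qed
  then show ?case using v xs by simp
next
  case (Mn g)
  let ?r = "\<lambda>m. eval_fuel g s (m # xs)"
  from Mn.prems have st: "mu_state ?r s = y + 2" by (auto simp: Let_def split: if_splits)
  from mu_state_found[OF st] have "?r y = Some 0" "\<forall>m'<y. \<exists>v. ?r m' = Some (Suc v)" by auto
  then show ?case using Mn.IH by (force intro!: ev_Mn)
qed

lemma mu_state_zero: "(\<forall>m<n. \<exists>v. r m = Some (Suc v)) \<Longrightarrow> s \<le> n \<Longrightarrow> mu_state r s = 0"
proof (induction s)
  case (Suc s)
  then obtain v where "r s = Some (Suc v)" by (metis Suc_le_lessD)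
  then show ?case using Suc by (simp add: mu_state_def)
qed (simp add: mu_state_def)

lemma mu_state_reach:
  assumes "\<forall>m<n. \<exists>v. r m = Some (Suc v)" "r n = Some 0" "n < s"
  shows "mu_state r s = n + 2"
  using assms(3)
proof (induction s)
  case 0 then show ?case by simp
next
  case (Suc s)
  show ?case
  proof (cases "s = n")
    case True
    then have "mu_state r s = 0" using mu_state_zero[OF assms(1)] by simp
    then show ?thesis using True assms(2) by (simp add: mu_state_def)
  next
    case False
    then have "mu_state r s = n + 2" using Suc by simp
    then show ?thesis by (simp add: mu_state_def)
  qed
qed

lemma eval_fuel_complete:
  assumes "eval p e xs y" "p = (\<lambda>_. 0)"
  shows "\<exists>s0. \<forall>s\<ge>s0. eval_fuel e s xs = Some y"
  using assms
proof (induction rule: eval.induct)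
  case (ev_Comp ys hs xs g z)
  from ev_Comp.IH(1) ev_Comp.prems have "\<forall>k<length hs. \<exists>s0. \<forall>s\<ge>s0. eval_fuel (hs ! k) s xs = Some (ys ! k)"
    by blast
  then obtain S where S: "\<And>k s. k < length hs \<Longrightarrow> s \<ge> S k \<Longrightarrow> eval_fuel (hs ! k) s xs = Some (ys ! k)"
    by metis
  from ev_Comp.IH(2) ev_Comp.prems obtain sg where sg: "\<And>s. s \<ge> sg \<Longrightarrow> eval_fuel g s ys = Some z" by blast
  show ?case
  proof (intro exI allI impI)
    fix s assume s: "sg + (\<Sum>k<length hs. S k) \<le> s"
    have "map (\<lambda>h. eval_fuel h s xs) hs = map Some ys"
    proof (rule nth_equalityI)
      show "length (map (\<lambda>h. eval_fuel h s xs) hs) = length (map Some ys)" using ev_Comp.hyps(1) by simp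
      fix k assume k: "k < length (map (\<lambda>h. eval_fuel h s xs) hs)"
      then have "S k \<le> (\<Sum>k<length hs. S k)" by (intro member_le_sum) auto
      then show "map (\<lambda>h. eval_fuel h s xs) hs ! k = map Some ys ! k"
        using S[of k s] k s ev_Comp.hyps(1) by auto
    qed
    then show "eval_fuel (Comp g hs) s xs = Some z" using sg[of s] s by (simp add: o_def)
  qed
next
  case (ev_Prim0 g xs y h)
  then obtain s0 where "\<forall>s\<ge>s0. eval_fuel g s xs = Some y" by blast
  then show ?case by auto
next
  case (ev_PrimS g h n xs y z)
  then obtain s1 s2 where s1: "\<forall>s\<ge>s1. eval_fuel (Prim g h) s (n # xs) = Some y"
    and s2: "\<forall>s\<ge>s2. eval_fuel h s (y # n # xs) = Some z" by blast
  show ?case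
  proof (intro exI allI impI)
    fix s assume "s1 + s2 \<le> s"
    then show "eval_fuel (Prim g h) s (Suc n # xs) = Some z" using s1[rule_format, of s] s2[rule_format, of s] by simp
  qed
next
  case (ev_Mn g n xs)
  from ev_Mn obtain s1 where s1: "\<forall>s\<ge>s1. eval_fuel g s (n # xs) = Some 0" by blast
  from ev_Mn have "\<forall>m<n. \<exists>v s0. v \<noteq> 0 \<and> (\<forall>s\<ge>s0. eval_fuel g s (m # xs) = Some v)" by blast
  then obtain V S where VS: "\<And>m s. m < n \<Longrightarrow> V m \<noteq> 0 \<and> (s \<ge> S m \<longrightarrow> eval_fuel g s (m # xs) = Some (V m))"
    by metis
  show ?case
  proof (intro exI allI impI)
    fix s assume s: "Suc n + s1 + (\<Sum>m<n. S m) \<le> s"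
    let ?r = "\<lambda>m. eval_fuel g s (m # xs)"
    have "\<forall>m<n. \<exists>v. ?r m = Some (Suc v)"
    proof (intro allI impI)
      fix m assume m: "m < n"
      then have "S m \<le> (\<Sum>m<n. S m)" by (intro member_le_sum) auto
      then have "?r m = Some (V m)" "V m \<noteq> 0" using VS[of m s] m s by auto
      then show "\<exists>v. ?r m = Some (Suc v)" by (cases "V m") auto
    qed
    moreover have "?r n = Some 0" using s1 s by auto
    ultimately have "mu_state ?r s = n + 2" using s by (intro mu_state_reach) auto
    then show "eval_fuel (Mn g) s xs = Some n" by simp
  qed
qed auto

definition opt_code :: "nat option \<Rightarrow> nat" where "opt_code = case_option 0 Suc"

lemma opt_code_simps[simp]: "opt_code None = 0" "opt_code (Some y) = Suc y"
  by (simp_all add: opt_code_def)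

lemma opt_code_prim_rec_opt: "opt_code (prim_rec_opt a h n) = prim_rec (opt_code a) (\<lambda>acc m. if acc = 0 then 0 else opt_code (h (acc - 1) m)) n"
proof (induction n)
  case (Suc n) then show ?case by (cases "prim_rec_opt a h n") (simp_all add: Suc.IH[symmetric])
qed simp

lemma mu_state_opt_code: "mu_state r s = prim_rec 0 (\<lambda>st m. if st \<noteq> 0 then st else
     (if opt_code (r m) = 0 then 1 else if opt_code (r m) = 1 then m + 2 else 0)) s"
  unfolding mu_state_def
  by (rule arg_cong[where f="\<lambda>h. prim_rec 0 h s"]) (auto simp: fun_eq_iff opt_code_def split: option.splits nat.splits)

lemma rf_eval_fuel_Comp:
  assumes IHg: "\<And>k. rec_fn (Suc k) (\<lambda>p ys. opt_code (eval_fuel g (hd ys) (tl ys)))"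
    and IHhs: "\<And>h k. h \<in> set hs \<Longrightarrow> rec_fn (Suc k) (\<lambda>p ys. opt_code (eval_fuel h (hd ys) (tl ys)))"
  shows "rec_fn (Suc k) (\<lambda>p ys. opt_code (eval_fuel (Comp g hs) (hd ys) (tl ys)))"
proof -
  define m where "m = length hs"
  define V where "V j (p::nat\<Rightarrow>nat) ys = opt_code (eval_fuel (hs ! j) (hd ys) (tl ys))" for j p ys
  define G where "G (p::nat\<Rightarrow>nat) zs = opt_code (eval_fuel g (hd zs) (tl zs))" for p zs
  define A where "A j = (if j = 0 then (\<lambda>p ys. ys ! 0) else (\<lambda>p ys. V (j - 1) p ys - 1))" for j
  have V: "rec_fn (Suc k) (V j)" if "j < m" for j
    unfolding V_def[abs_def] using IHhs that m_def by auto
  have G: "rec_fn (Suc m) G" unfolding G_def[abs_def] by (rule IHg)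
  have A: "rec_fn (Suc k) (A j)" if "j < Suc m" for j
  proof (cases "j = 0")
    case True then show ?thesis unfolding A_def by (auto intro: rf_nth)
  next
    case False
    have "rec_fn (Suc k) (\<lambda>p ys. V (j - 1) p ys - 1)" using that False by (intro rf_pred V) simp
    then show ?thesis unfolding A_def using False by simp
  qed
  have "rec_fn (Suc k) (\<lambda>p ys. if (\<Prod>j<m. V j p ys) \<noteq> 0 then G p (map (\<lambda>j. A j p ys) [0..<Suc m]) else 0)"
    by (intro rf_if rp_nz rf_prod_fin V rf_subst[OF G A] rf_const)
  then show ?thesis
  proof (rule rf_cong)
    fix p and ys :: "nat list" assume "length ys = Suc k"
    let ?s = "hd ys" and ?xs = "tl ys"
    let ?rs = "map (\<lambda>h. eval_fuel h ?s ?xs) hs"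
    show "(if (\<Prod>j<m. V j p ys) \<noteq> 0 then G p (map (\<lambda>j. A j p ys) [0..<Suc m]) else 0) =
        opt_code (eval_fuel (Comp g hs) (hd ys) (tl ys))"
    proof (cases "None \<in> set ?rs")
      case True
      then obtain j where j: "j < m" "eval_fuel (hs ! j) ?s ?xs = None"
        unfolding m_def by (auto simp: in_set_conv_nth)
      then have "(\<Prod>j<m. V j p ys) = 0" unfolding V_def
        by (intro prod_zero) (auto intro!: bexI[of _ j])
      then show ?thesis using True by (simp add: Let_def)
    next
      case False
      then have Vj: "V j p ys = Suc (the (?rs ! j))" if "j < m" for j
        using that unfolding V_def m_def
        by (metis (no_types, lifting) opt_code_simps(2) length_map nth_map nth_mem option.collapse)
      then have "(\<Prod>j<m. V j p ys) \<noteq> 0" by simp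
      moreover have "map (\<lambda>j. A j p ys) [0..<Suc m] = ?s # map the ?rs"
      proof -
        have "map (\<lambda>j. A j p ys) [0..<Suc m] = A 0 p ys # map (\<lambda>j. A (Suc j) p ys) [0..<m]"
          by (rule nth_equalityI) (auto simp: nth_Cons' nth_append simp del: upt_Suc)
        also have "map (\<lambda>j. A (Suc j) p ys) [0..<m] = map the ?rs"
          by (rule nth_equalityI) (auto simp: A_def Vj m_def)
        finally show ?thesis using \<open>length ys = Suc k\<close> by (cases ys) (auto simp: A_def)
      qed
      ultimately show ?thesis using False by (simp add: Let_def G_def)
    qed
  qed
qed

lemma rf_eval_fuel_Prim:
  assumes IHg: "\<And>k. rec_fn (Suc k) (\<lambda>p ys. opt_code (eval_fuel g (hd ys) (tl ys)))" and IHh: "\<And>k. rec_fn (Suc k) (\<lambda>p ys. opt_code (eval_fuel h (hd ys) (tl ys)))"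
  shows "rec_fn (Suc k) (\<lambda>p ys. opt_code (eval_fuel (Prim g h) (hd ys) (tl ys)))"
proof -
  show ?thesis
  proof (cases k)
    case 0 then show ?thesis by (intro rf_cong[OF rf_const[of _ 0]]) (auto simp: length_Suc_conv)
  next
    case (Suc k')
    define G where "G (p::nat\<Rightarrow>nat) zs = opt_code (eval_fuel g (hd zs) (tl zs))" for p zs
    define H where "H (p::nat\<Rightarrow>nat) zs = opt_code (eval_fuel h (hd zs) (tl zs))" for p zs
    have G: "rec_fn (Suc k') G" unfolding G_def[abs_def] by (rule IHg)
    have H: "rec_fn (Suc (Suc (Suc k'))) H" unfolding H_def[abs_def] by (rule IHh)
    define ia where "ia j = (if j = 0 then 0 else Suc j)" for j :: nat
    define ih where "ih j = (if j = 0 then 2 else if j = 2 then 1 else Suc j)" for j :: nat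
    define AH where "AH j = (if j = 1 then (\<lambda>(p::nat\<Rightarrow>nat) (zs::nat list). zs ! 0 - 1) else (\<lambda>p zs. zs ! ih j))" for j :: nat
    have a: "rec_fn (Suc k) (\<lambda>p ys. G p (map (\<lambda>j. ys ! ia j) [0..<Suc k']))"
      by (rule rf_reindex[OF G]) (auto simp: ia_def Suc)
    have AH: "rec_fn (Suc (Suc (Suc k))) (AH j)" if "j < Suc (Suc (Suc k'))" for j
      using that by (auto simp: AH_def ih_def Suc intro!: rf_pred rf_pred[simplified] rf_nth)
    have h': "rec_fn (Suc (Suc (Suc k))) (\<lambda>p zs. if zs ! 0 = 0 then 0 else
        H p (map (\<lambda>j. AH j p zs) [0..<Suc (Suc (Suc k'))]))"
      by (intro rf_if rp_eq rf_nth rf_const rf_subst[OF H AH]) auto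
    have "rec_fn (Suc k) (\<lambda>p ys. prim_rec (G p (map (\<lambda>j. ys ! ia j) [0..<Suc k']))
       (\<lambda>y n. (\<lambda>p zs. if zs ! 0 = 0 then 0 else
        H p (map (\<lambda>j. AH j p zs) [0..<Suc (Suc (Suc k'))])) p (y # n # ys)) (ys ! 1))"
      by (rule rf_prim_rec[OF a h']) (rule rf_nth, simp add: Suc)
    then show ?thesis
    proof (rule rf_cong)
      fix p and ys :: "nat list" assume l: "length ys = Suc k"
      then obtain s n xs where ys: "ys = s # n # xs" and lxs: "length xs = k'"
        using Suc by (auto simp: length_Suc_conv)
      have 1: "map (\<lambda>j. ys ! ia j) [0..<Suc k'] = s # xs"
        using lxs by (intro nth_equalityI) (auto simp: ys ia_def nth_Cons' simp del: upt_Suc)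
      have 2: "map (\<lambda>j. AH j p (y # m # ys)) [0..<Suc (Suc (Suc k'))]
          = s # (y - 1) # m # xs" for y m
        using lxs by (intro nth_equalityI) (auto simp: ys ih_def AH_def nth_Cons' split: if_splits simp del: upt_Suc)
      show "prim_rec (G p (map (\<lambda>j. ys ! ia j) [0..<Suc k']))
         (\<lambda>y n. (\<lambda>p zs. if zs ! 0 = 0 then 0 else
        H p (map (\<lambda>j. AH j p zs) [0..<Suc (Suc (Suc k'))])) p (y # n # ys)) (ys ! 1)
        = opt_code (eval_fuel (Prim g h) (hd ys) (tl ys))"
        unfolding 1 2 by (simp add: ys opt_code_prim_rec_opt G_def H_def cong: if_cong)
    qed
  qed
qed

lemma rf_eval_fuel_Mn:
  assumes IHg: "\<And>k. rec_fn (Suc k) (\<lambda>p ys. opt_code (eval_fuel g (hd ys) (tl ys)))"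
  shows "rec_fn (Suc k) (\<lambda>p ys. opt_code (eval_fuel (Mn g) (hd ys) (tl ys)))"
proof -
  define G where "G (p::nat\<Rightarrow>nat) zs = opt_code (eval_fuel g (hd zs) (tl zs))" for p zs
  have G: "rec_fn (Suc (Suc k)) G" unfolding G_def[abs_def] by (rule IHg)
  define ig where "ig j = (if j = 0 then 2 else if j = 1 then 1 else Suc j)" for j :: nat
  define VV where "VV (p::nat\<Rightarrow>nat) zs = G p (map (\<lambda>j. zs ! ig j) [0..<Suc (Suc k)])" for p zs
  have VV: "rec_fn (Suc (Suc (Suc k))) VV" unfolding VV_def[abs_def]
    by (rule rf_reindex[OF G]) (auto simp: ig_def)
  have h': "rec_fn (Suc (Suc (Suc k))) (\<lambda>p zs. if zs ! 0 \<noteq> 0 then zs ! 0 else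
      (if VV p zs = 0 then 1 else if VV p zs = 1 then zs ! 1 + 2 else 0))"
    by (intro rf_if rp_nz rp_eq rf_nth rf_const VV rf_add) auto
  have "rec_fn (Suc k) (\<lambda>p ys. prim_rec ((\<lambda>p ys. 0) p ys) (\<lambda>y n. (\<lambda>p zs. if zs ! 0 \<noteq> 0 then zs ! 0 else
      (if VV p zs = 0 then 1 else if VV p zs = 1 then zs ! 1 + 2 else 0)) p (y # n # ys)) (ys ! 0))"
    by (rule rf_prim_rec[OF rf_zero h']) (rule rf_nth, simp)
  then have X: "rec_fn (Suc k) (\<lambda>p ys. prim_rec 0 (\<lambda>y n. if y \<noteq> 0 then y else
      (if VV p (y # n # ys) = 0 then 1 else if VV p (y # n # ys) = 1 then n + 2 else 0)) (ys ! 0))"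
    by (simp cong: if_cong)
  have "rec_fn (Suc k) (\<lambda>p ys. if 2 \<le> prim_rec 0 (\<lambda>y n. if y \<noteq> 0 then y else
      (if VV p (y # n # ys) = 0 then 1 else if VV p (y # n # ys) = 1 then n + 2 else 0)) (ys ! 0)
     then prim_rec 0 (\<lambda>y n. if y \<noteq> 0 then y else
      (if VV p (y # n # ys) = 0 then 1 else if VV p (y # n # ys) = 1 then n + 2 else 0)) (ys ! 0) - 1 else 0)"
    by (rule rf_if[OF rp_le[OF rf_const X] rf_pred[OF X] rf_const])
  then show ?thesis
  proof (rule rf_cong)
    fix p and ys :: "nat list" assume "length ys = Suc k"
    then obtain s xs where ys: "ys = s # xs" and lxs: "length xs = k" by (auto simp: length_Suc_conv)
    have "VV p (y # n # ys) = opt_code (eval_fuel g s (n # xs))" for y n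
    proof -
      have "map (\<lambda>j. (y # n # ys) ! ig j) [0..<Suc (Suc k)] = s # n # xs"
        using lxs by (intro nth_equalityI) (auto simp: ys ig_def nth_Cons' simp del: upt_Suc)
      then show ?thesis by (simp add: VV_def G_def)
    qed
    then show "(if 2 \<le> prim_rec 0 (\<lambda>y n. if y \<noteq> 0 then y else
      (if VV p (y # n # ys) = 0 then 1 else if VV p (y # n # ys) = 1 then n + 2 else 0)) (ys ! 0)
     then prim_rec 0 (\<lambda>y n. if y \<noteq> 0 then y else
      (if VV p (y # n # ys) = 0 then 1 else if VV p (y # n # ys) = 1 then n + 2 else 0)) (ys ! 0) - 1 else 0)
      = opt_code (eval_fuel (Mn g) (hd ys) (tl ys))"
      apply (simp add: ys Let_def mu_state_opt_code del: One_nat_def cong: if_cong)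
      by linarith
  qed
qed

lemma rf_eval_fuel: "rec_fn (Suc k) (\<lambda>p ys. opt_code (eval_fuel e (hd ys) (tl ys)))"
proof (induction e arbitrary: k)
  case Zr
  show ?case by (rule rf_cong[OF rf_const[of _ 1]]) simp
next
  case Sc
  show ?case
  proof (cases k)
    case 0 then show ?thesis by (intro rf_cong[OF rf_const[of _ 0]]) (auto simp: length_Suc_conv)
  next
    case (Suc k')
    have "rec_fn (Suc k) (\<lambda>p ys. Suc (Suc (ys ! 1)))" using Suc by (intro rf_Suc rf_nth) simp
    then show ?thesis by (rule rf_cong) (auto simp: Suc length_Suc_conv)
  qed
next
  case (Proj i)
  show ?case
  proof (cases "i < k")
    case True
    have "rec_fn (Suc k) (\<lambda>p ys. Suc (ys ! Suc i))" using True by (intro rf_Suc rf_nth) simp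
    then show ?thesis by (rule rf_cong) (use True in \<open>auto simp: length_Suc_conv\<close>)
  next
    case False then show ?thesis by (intro rf_cong[OF rf_const[of _ 0]]) (auto simp: length_Suc_conv)
  qed
next
  case Orc
  show ?case
  proof (cases k)
    case 0 then show ?thesis by (intro rf_cong[OF rf_const[of _ 0]]) (auto simp: length_Suc_conv)
  next
    case (Suc k')
    then show ?thesis by (intro rf_cong[OF rf_const[of _ 1]]) (auto simp: length_Suc_conv)
  qed
next
  case (Comp g hs) then show ?case by (rule rf_eval_fuel_Comp)
next
  case (Prim g h) then show ?case by (rule rf_eval_fuel_Prim)
next
  case (Mn g) then show ?case by (rule rf_eval_fuel_Mn)
qed

lemma halts_iff_eval_fuel: "(\<exists>y. eval (\<lambda>_. 0) e xs y) \<longleftrightarrow> (\<exists>s. opt_code (eval_fuel e s xs) \<noteq> 0)"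
proof
  assume "\<exists>y. eval (\<lambda>_. 0) e xs y"
  then obtain y where "eval (\<lambda>_. 0) e xs y" by blast
  from eval_fuel_complete[OF this refl] obtain s0 where "\<forall>s\<ge>s0. eval_fuel e s xs = Some y" by blast
  then show "\<exists>s. opt_code (eval_fuel e s xs) \<noteq> 0" by (intro exI[of _ s0]) auto
next
  assume "\<exists>s. opt_code (eval_fuel e s xs) \<noteq> 0"
  then obtain s y where "eval_fuel e s xs = Some y" by (auto simp: opt_code_def split: option.splits)
  then show "\<exists>y. eval (\<lambda>_. 0) e xs y" using eval_fuel_sound by blast
qed

lemma ce_step_function:
  assumes "ce A"
  shows "\<exists>R. rec_fn 2 (\<lambda>p xs. R (xs ! 0) (xs ! 1)) \<and> (\<forall>x. x \<in> A \<longleftrightarrow> (\<exists>s. R x s \<noteq> 0))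
     \<and> (\<forall>x s s'. s \<le> s' \<longrightarrow> R x s \<noteq> 0 \<longrightarrow> R x s' \<noteq> 0)"
proof -
  from assms obtain e where e: "\<forall>x. x \<in> A \<longleftrightarrow> (\<exists>y. eval (\<lambda>_. 0) e [x] y)" unfolding ce_def by blast
  define R where "R x s = (of_bool (\<exists>t<Suc s. opt_code (eval_fuel e t [x]) \<noteq> 0) :: nat)" for x s :: nat
  have F: "rec_fn 2 (\<lambda>p ys. opt_code (eval_fuel e (hd ys) (tl ys)))" using rf_eval_fuel[of 1 e] by (simp add: numeral_2_eq_2)
  have F': "rec_fn (Suc 2) (\<lambda>p ys. (\<lambda>p ys. opt_code (eval_fuel e (hd ys) (tl ys))) p (map (\<lambda>j. ys ! j) [0..<2]))"
    by (rule rf_reindex[OF F]) auto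
  have P: "rec_pred (Suc 2) (\<lambda>p ys. opt_code (eval_fuel e (ys ! 0) [ys ! 1]) \<noteq> 0)"
    by (rule rp_cong[OF rp_nz[OF F']]) (simp add: numeral_2_eq_2 upt_rec)
  have "rec_pred 2 (\<lambda>p xs. \<exists>t<Suc (xs ! 1). (\<lambda>p ys. opt_code (eval_fuel e (ys ! 0) [ys ! 1]) \<noteq> 0) p (t # xs))"
    by (rule rp_bex[OF P]) (intro rf_Suc rf_nth, simp)
  then have "rec_fn 2 (\<lambda>p xs. R (xs ! 0) (xs ! 1))" unfolding rec_pred_def
    by (rule rf_cong) (auto simp: R_def)
  moreover have "\<forall>x. x \<in> A \<longleftrightarrow> (\<exists>s. R x s \<noteq> 0)" using e halts_iff_eval_fuel by (auto simp: R_def)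
  moreover have "\<forall>x s s'. s \<le> s' \<longrightarrow> R x s \<noteq> 0 \<longrightarrow> R x s' \<noteq> 0"
    by (auto simp: R_def) (meson le_trans less_Suc_eq_le)
  ultimately show ?thesis by blast
qed

lemma ce_of_step_function:
  assumes R: "rec_fn 2 (\<lambda>p xs. R (xs ! 0) (xs ! 1))"
  shows "ce {x. \<exists>s. R x s \<noteq> 0}"
proof -
  have "rec_fn 2 (\<lambda>p ys. (\<lambda>p xs. R (xs ! 0) (xs ! 1)) p (map (\<lambda>j. ys ! (1 - j)) [0..<2]))"
    by (rule rf_reindex[OF R]) auto
  then have "rec_pred 2 (\<lambda>p ys. R (ys ! 1) (ys ! 0) = 0)"
    unfolding rec_pred_def[symmetric] by (intro rp_eq rf_const) (simp add: numeral_2_eq_2)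
  then obtain g where g: "\<forall>p xs. length xs = 2 \<longrightarrow> eval p g xs (of_bool (R (xs ! 1) (xs ! 0) = 0))"
    unfolding rec_pred_def rec_fn_def by blast
  show ?thesis unfolding ce_def
  proof (intro exI allI)
    fix x
    show "x \<in> {x. \<exists>s. R x s \<noteq> 0} \<longleftrightarrow> (\<exists>y. eval (\<lambda>_. 0) (Mn g) [x] y)"
    proof
      assume "x \<in> {x. \<exists>s. R x s \<noteq> 0}"
      then have ex: "\<exists>s. R x s \<noteq> 0" by simp
      define n where "n = (LEAST s. R x s \<noteq> 0)"
      have "R x n \<noteq> 0" unfolding n_def using ex by (rule LeastI_ex)
      moreover have "\<forall>m<n. R x m = 0" unfolding n_def using not_less_Least by blast
      ultimately have "eval (\<lambda>_. 0) (Mn g) [x] n"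
      proof (intro ev_Mn)
        assume a: "R x n \<noteq> 0" "\<forall>m<n. R x m = 0"
        have "eval (\<lambda>_. 0) g [n, x] (of_bool (R x n = 0))" using g[rule_format, of "[n, x]"] by simp
        then show "eval (\<lambda>_. 0) g [n, x] 0" using a by simp
        show "\<forall>m<n. \<exists>y. y \<noteq> 0 \<and> eval (\<lambda>_. 0) g [m, x] y"
        proof (intro allI impI exI conjI)
          fix m assume "m < n"
          have "eval (\<lambda>_. 0) g [m, x] (of_bool (R x m = 0))" using g[rule_format, of "[m, x]"] by simp
          then show "eval (\<lambda>_. 0) g [m, x] 1" using a \<open>m < n\<close> by simp
        qed simp
      qed
      then show "\<exists>y. eval (\<lambda>_. 0) (Mn g) [x] y" by blast
    next
      assume "\<exists>y. eval (\<lambda>_. 0) (Mn g) [x] y"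
      then obtain n where "eval (\<lambda>_. 0) (Mn g) [x] n" by blast
      then have "eval (\<lambda>_. 0) g [n, x] 0" by (auto elim: ev_MnE)
      moreover have "eval (\<lambda>_. 0) g [n, x] (of_bool (R x n = 0))" using g[rule_format, of "[n, x]"] by simp
      ultimately have "of_bool (R x n = 0) = (0::nat)" using eval_det by blast
      then show "x \<in> {x. \<exists>s. R x s \<noteq> 0}" by (auto split: if_splits)
    qed
  qed
qed

lemma ce_of_rec_pred_projection:
  assumes "rec_pred 2 (\<lambda>p xs. Q (xs ! 0) (xs ! 1))"
  shows "ce {x. \<exists>w. Q x w}"
proof -
  have "ce {x. \<exists>w. (of_bool (Q x w) :: nat) \<noteq> 0}"
    by (rule ce_of_step_function) (use assms in \<open>simp add: rec_pred_def\<close>)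
  then show ?thesis by simp
qed

section \<open>Cantor space\<close>

definition init_seg :: "cantor \<Rightarrow> nat \<Rightarrow> bool list" where
  "init_seg X n = map X [0..<n]"

lemma length_init_seg[simp]: "length (init_seg X n) = n" by (simp add: init_seg_def)

lemma nth_init_seg[simp]: "i < n \<Longrightarrow> init_seg X n ! i = X i" by (simp add: init_seg_def)

lemma in_cyl: "X \<in> cyl \<sigma> \<longleftrightarrow> init_seg X (length \<sigma>) = \<sigma>"
proof
  assume "X \<in> cyl \<sigma>" then show "init_seg X (length \<sigma>) = \<sigma>"
    by (intro nth_equalityI) (auto simp: cyl_def)
next
  assume e: "init_seg X (length \<sigma>) = \<sigma>"
  have "X i = \<sigma> ! i" if "i < length \<sigma>" for i
    using nth_init_seg[OF that, of X] e by simp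
  then show "X \<in> cyl \<sigma>" by (simp add: cyl_def)
qed

lemma in_cyl_init_seg[simp]: "X \<in> cyl (init_seg X n)"
  by (simp add: in_cyl)

lemma cyl_subset: "cyl \<sigma> \<subseteq> cyl \<rho> \<longleftrightarrow> length \<rho> \<le> length \<sigma> \<and> take (length \<rho>) \<sigma> = \<rho>"
proof
  assume s: "cyl \<sigma> \<subseteq> cyl \<rho>"
  have len: "length \<rho> \<le> length \<sigma>"
  proof (rule ccontr)
    assume "\<not> length \<rho> \<le> length \<sigma>"
    then have l: "length \<sigma> < length \<rho>" by simp
    define X where "X i = (if i < length \<sigma> then \<sigma> ! i else \<not> \<rho> ! i)" for i
    have "X \<in> cyl \<sigma>" by (auto simp: cyl_def X_def)
    then have "X \<in> cyl \<rho>" using s by blast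
    then have "X (length \<sigma>) = \<rho> ! length \<sigma>" using l by (auto simp: cyl_def)
    then show False by (simp add: X_def)
  qed
  define X where "X i = (if i < length \<sigma> then \<sigma> ! i else False)" for i
  have "X \<in> cyl \<sigma>" by (auto simp: cyl_def X_def)
  then have "X \<in> cyl \<rho>" using s by blast
  then have "take (length \<rho>) \<sigma> = \<rho>" using len
    by (intro nth_equalityI) (auto simp: cyl_def X_def)
  then show "length \<rho> \<le> length \<sigma> \<and> take (length \<rho>) \<sigma> = \<rho>" using len by simp
next
  assume "length \<rho> \<le> length \<sigma> \<and> take (length \<rho>) \<sigma> = \<rho>"
  then have a: "length \<rho> \<le> length \<sigma>" "take (length \<rho>) \<sigma> = \<rho>" by auto
  show "cyl \<sigma> \<subseteq> cyl \<rho>" 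
  proof
    fix X assume "X \<in> cyl \<sigma>"
    then have X: "\<forall>i<length \<sigma>. X i = \<sigma> ! i" by (simp add: cyl_def)
    have "X i = \<rho> ! i" if i: "i < length \<rho>" for i
    proof -
    have "\<rho> ! i = take (length \<rho>) \<sigma> ! i" using a by simp
    also have "\<dots> = \<sigma> ! i" using i by simp
    finally show "X i = \<rho> ! i" using X i a by simp
    qed
    then show "X \<in> cyl \<rho>" by (simp add: cyl_def)
  qed
qed

lemma open_cantorD: "open_cantor V \<Longrightarrow> X \<in> V \<Longrightarrow> \<exists>n. cyl (init_seg X n) \<subseteq> V"
proof -
  assume "open_cantor V" "X \<in> V"
  then obtain \<sigma> where "X \<in> cyl \<sigma>" "cyl \<sigma> \<subseteq> V" unfolding open_cantor_def by blast
  then have "init_seg X (length \<sigma>) = \<sigma>" by (simp add: in_cyl)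
  then show ?thesis using \<open>cyl \<sigma> \<subseteq> V\<close> by (intro exI[of _ "length \<sigma>"]) simp
qed

lemma open_cantorI: "(\<And>X. X \<in> V \<Longrightarrow> \<exists>\<sigma>. X \<in> cyl \<sigma> \<and> cyl \<sigma> \<subseteq> V) \<Longrightarrow> open_cantor V"
  unfolding open_cantor_def by blast

lemma open_cantor_iff_init_seg: "open_cantor V \<longleftrightarrow> (\<forall>X\<in>V. \<exists>n. cyl (init_seg X n) \<subseteq> V)"
proof
  assume "open_cantor V" then show "\<forall>X\<in>V. \<exists>n. cyl (init_seg X n) \<subseteq> V" using open_cantorD by blast
next
  assume "\<forall>X\<in>V. \<exists>n. cyl (init_seg X n) \<subseteq> V"
  then show "open_cantor V" by (intro open_cantorI) (meson in_cyl_init_seg)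
qed

definition bits_of_nat :: "nat \<Rightarrow> nat \<Rightarrow> bool list" where
  "bits_of_nat N l = map (\<lambda>i. odd (N div 2 ^ i)) [0..<l]"

primrec nat_of_bits :: "bool list \<Rightarrow> nat" where
  "nat_of_bits [] = 0"
| "nat_of_bits (b # \<sigma>) = of_bool b + 2 * nat_of_bits \<sigma>"

lemma length_bits_of_nat[simp]: "length (bits_of_nat N l) = l" by (simp add: bits_of_nat_def)

lemma nth_bits_of_nat[simp]: "i < l \<Longrightarrow> bits_of_nat N l ! i = odd (N div 2 ^ i)" by (simp add: bits_of_nat_def)

lemma bit_nat_of_bits: "odd (nat_of_bits \<sigma> div 2 ^ i) = (i < length \<sigma> \<and> \<sigma> ! i)"
proof (induction \<sigma> arbitrary: i)
  case Nil then show ?case by simp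
next
  case (Cons b \<sigma>)
  show ?case
  proof (cases i)
    case 0 then show ?thesis by simp
  next
    case (Suc i')
    have "nat_of_bits (b # \<sigma>) div 2 ^ i = (of_bool b + 2 * nat_of_bits \<sigma>) div 2 div 2 ^ i'"
      unfolding Suc by (simp only: power_Suc div_mult2_eq nat_of_bits.simps)
    also have "(of_bool b + 2 * nat_of_bits \<sigma>) div 2 = nat_of_bits \<sigma>" by (cases b) simp_all
    finally show ?thesis using Cons.IH[of i'] Suc by simp
  qed
qed

lemma nat_of_bits_less: "nat_of_bits \<sigma> < 2 ^ length \<sigma>"
  by (induction \<sigma>) auto

lemma bits_of_nat_of_bits: "bits_of_nat (nat_of_bits \<sigma>) (length \<sigma>) = \<sigma>"
  by (intro nth_equalityI) (auto simp: bit_nat_of_bits)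

lemma bits_of_nat_eqI: "(\<And>i. i < l \<Longrightarrow> odd (N div 2 ^ i) = odd (N' div 2 ^ i)) \<Longrightarrow> bits_of_nat N l = bits_of_nat N' l"
  by (intro nth_equalityI) auto

lemma take_bits_of_nat: "l \<le> m \<Longrightarrow> take l (bits_of_nat N m) = bits_of_nat N l"
  by (intro nth_equalityI) auto

lemma str_code_inj: "str_code \<sigma> = str_code \<rho> \<longleftrightarrow> \<sigma> = \<rho>"
proof
  assume "str_code \<sigma> = str_code \<rho>"
  then have "map of_bool \<sigma> = (map of_bool \<rho> :: nat list)"
    unfolding str_code_def by (metis list_encode_inverse)
  moreover have "inj (of_bool :: bool \<Rightarrow> nat)" by (auto simp: inj_def)
  ultimately show "\<sigma> = \<rho>" by (simp add: inj_map_eq_map)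
qed simp

lemma rf_str_code:
  assumes B: "rec_pred (Suc k) B" and L: "rec_fn k L"
  shows "rec_fn k (\<lambda>p xs. str_code (map (\<lambda>i. B p (i # xs)) [0..<L p xs]))"
proof -
  have "rec_fn k (\<lambda>p xs. list_encode (map (\<lambda>i. of_bool (B p (i # xs))) [0..<L p xs]))"
    by (rule rf_list_encode[OF B[unfolded rec_pred_def] L])
  then show ?thesis by (simp add: str_code_def o_def)
qed

lemma rf_str_code_bits:
  assumes N: "rec_fn k N" and L: "rec_fn k L"
  shows "rec_fn k (\<lambda>p xs. str_code (bits_of_nat (N p xs) (L p xs)))"
proof -
  have N1: "rec_fn (1 + k) (\<lambda>p ys. N p (drop 1 ys))" by (rule rf_drop[OF N])
  have "rec_pred (Suc k) (\<lambda>p ys. odd (N p (drop 1 ys) div 2 ^ (ys ! 0)))"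
    using N1 by (intro rp_bit rf_nth) auto
  from rf_str_code[OF this L] show ?thesis by (simp add: bits_of_nat_def)
qed

lemma rf_str_code_oracle:
  assumes L: "rec_fn k L"
  shows "rec_fn k (\<lambda>p xs. str_code (map (\<lambda>i. p i \<noteq> 0) [0..<L p xs]))"
proof -
  have "rec_pred (Suc k) (\<lambda>p ys. p (ys ! 0) \<noteq> 0)" by (intro rp_nz rf_orc rf_nth) simp
  from rf_str_code[OF this L] show ?thesis by simp
qed

abbreviation "unpair1 w \<equiv> fst (prod_decode w)"

abbreviation "unpair2 w \<equiv> snd (prod_decode w)"

lemma finite_set_bit_code: "finite {i. \<mu> i} \<Longrightarrow> \<exists>M::nat. \<forall>i. \<mu> i = odd (M div 2 ^ i)"
proof -
  assume "finite {i. \<mu> i}"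
  then obtain K where K: "\<forall>i\<in>{i. \<mu> i}. i < K" using finite_nat_bounded by blast
  show ?thesis
  proof (rule exI[of _ "nat_of_bits (init_seg \<mu> K)"], intro allI)
    fix i
    show "\<mu> i = odd (nat_of_bits (init_seg \<mu> K) div 2 ^ i)"
      using K by (auto simp: bit_nat_of_bits)
  qed
qed

lemmas rf_intros = rf_unpair1 rf_unpair2 rf_prod_encode rf_str_code_bits rf_add rf_const rf_nth rf_Suc rf_mult rf_sub
  rf_pow2 rp_eq rp_le rp_less rp_and rp_or rp_not rp_imp rp_iff rp_bit rp_nz

lemma ce_cylinder_codes:
  assumes P: "rec_pred 4 (\<lambda>p xs. P (xs ! 0) (xs ! 1) (xs ! 2) (xs ! 3))"
    and sound: "\<And>i N l s. P i N l s \<Longrightarrow> Q i (bits_of_nat N l)"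
    and complete: "\<And>i \<sigma>. Q i \<sigma> \<Longrightarrow> \<exists>s. P i (nat_of_bits \<sigma>) (length \<sigma>) s"
  shows "ce {prod_encode (i, str_code \<sigma>) | i \<sigma>. Q i \<sigma>}"
proof -
  define R where "R x w \<longleftrightarrow>
      x = prod_encode (unpair1 w, str_code (bits_of_nat (unpair1 (unpair2 w)) (unpair1 (unpair2 (unpair2 w)))))
    \<and> P (unpair1 w) (unpair1 (unpair2 w)) (unpair1 (unpair2 (unpair2 w))) (unpair2 (unpair2 (unpair2 w)))"
    for x w
  have "rec_pred 2 (\<lambda>p xs. R (xs ! 0) (xs ! 1))"
    unfolding R_def by (intro rp_and rp_eq rp_app4[OF P] rf_intros) auto
  then have "ce {x. \<exists>w. R x w}" by (rule ce_of_rec_pred_projection)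
  also have "{x. \<exists>w. R x w} = {prod_encode (i, str_code \<sigma>) | i \<sigma>. Q i \<sigma>}"
  proof (intro set_eqI iffI)
    fix x assume "x \<in> {x. \<exists>w. R x w}"
    then show "x \<in> {prod_encode (i, str_code \<sigma>) | i \<sigma>. Q i \<sigma>}"
      using sound unfolding R_def by blast
  next
    fix x assume "x \<in> {prod_encode (i, str_code \<sigma>) | i \<sigma>. Q i \<sigma>}"
    then obtain i \<sigma> where x: "x = prod_encode (i, str_code \<sigma>)" and "Q i \<sigma>" by blast
    then obtain s where "P i (nat_of_bits \<sigma>) (length \<sigma>) s" using complete by blast
    then have "R x (prod_encode (i, prod_encode (nat_of_bits \<sigma>, prod_encode (length \<sigma>, s))))"
      unfolding R_def by (simp add: x bits_of_nat_of_bits)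
    then show "x \<in> {x. \<exists>w. R x w}" by blast
  qed
  finally show ?thesis .
qed

lemma mltest_step_function:
  assumes "mltest V"
  obtains R where "rec_fn 2 (\<lambda>p xs. R (xs ! 0) (xs ! 1))"
    "\<And>j \<rho>. cyl \<rho> \<subseteq> V j \<longleftrightarrow> (\<exists>s. R (prod_encode (j, str_code \<rho>)) s \<noteq> 0)"
    "\<And>x s s'. s \<le> s' \<Longrightarrow> R x s \<noteq> 0 \<Longrightarrow> R x s' \<noteq> 0"
proof -
  from assms have "ce {prod_encode (i, str_code \<sigma>) | i \<sigma>. cyl \<sigma> \<subseteq> V i}" by (simp add: mltest_def)
  from ce_step_function[OF this] obtain R where R: "rec_fn 2 (\<lambda>p xs. R (xs ! 0) (xs ! 1))"
    and Rc: "\<forall>x. x \<in> {prod_encode (i, str_code \<sigma>) | i \<sigma>. cyl \<sigma> \<subseteq> V i} \<longleftrightarrow> (\<exists>s. R x s \<noteq> 0)"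
    and Rm: "\<forall>x s s'. s \<le> s' \<longrightarrow> R x s \<noteq> 0 \<longrightarrow> R x s' \<noteq> 0"
    by blast
  have "cyl \<rho> \<subseteq> V j \<longleftrightarrow> (\<exists>s. R (prod_encode (j, str_code \<rho>)) s \<noteq> 0)" for j \<rho>
    using Rc[rule_format, of "prod_encode (j, str_code \<rho>)"] by (auto simp: str_code_inj)
  then show ?thesis using that R Rm by blast
qed

section \<open>The uniform measure\<close>

abbreviation "coin \<equiv> measure_pmf (pmf_of_set (UNIV :: bool set))"

lemma prob_space_coin: "prob_space coin" by (rule prob_space_measure_pmf)

lemma space_lambdaC[simp]: "space lambdaC = UNIV"
  by (simp add: lambdaC_def space_PiM)

interpretation uniform: prob_space lambdaC
  unfolding lambdaC_def by (rule prob_space_PiM) (rule prob_space_coin)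

lemma cyl_emb: "cyl \<sigma> = prod_emb UNIV (\<lambda>_. coin) {0..<length \<sigma>} (Pi\<^sub>E {0..<length \<sigma>} (\<lambda>i. {\<sigma> ! i}))"
proof -
  have "space (PiM UNIV (\<lambda>_. coin)) = UNIV" by (simp add: space_PiM)
  then show ?thesis unfolding prod_emb_def cyl_def by (auto simp: PiE_iff)
qed

lemma cyl_sets[measurable]: "cyl \<sigma> \<in> sets lambdaC"
  unfolding cyl_emb lambdaC_def by (intro sets_PiM_I_finite measurable_prod_emb) auto

lemma emeasure_coin: "emeasure coin {b} = ennreal (1/2)"
proof -
  have "emeasure coin {b} = ennreal (measure coin {b})" by (simp add: measure_pmf.emeasure_eq_measure)
  also have "measure coin {b} = 1/2" by (subst measure_pmf_of_set) auto
  finally show ?thesis .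
qed

lemma measure_cyl: "measure lambdaC (cyl \<sigma>) = (1/2) ^ length \<sigma>"
proof -
  have "emeasure lambdaC (cyl \<sigma>) = (\<Prod>i\<in>{0..<length \<sigma>}. emeasure coin {\<sigma> ! i})"
    unfolding cyl_emb lambdaC_def by (rule emeasure_PiM_emb) (auto intro: prob_space_coin)
  also have "\<dots> = ennreal (1/2) ^ length \<sigma>"
    by (simp only: emeasure_coin prod_constant card_atLeastLessThan diff_zero)
  also have "\<dots> = ennreal ((1/2) ^ length \<sigma>)" by (rule ennreal_power) simp
  finally show ?thesis by (simp add: uniform.emeasure_eq_measure)
qed

lemma open_sets: assumes "open_cantor V" shows "V \<in> sets lambdaC"
proof -
  have "V = (\<Union>\<sigma>\<in>{\<sigma>. cyl \<sigma> \<subseteq> V}. cyl \<sigma>)" using assms unfolding open_cantor_def by blast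
  also have "\<dots> \<in> sets lambdaC" by (intro sets.countable_UN') auto
  finally show ?thesis .
qed

definition flip :: "cantor \<Rightarrow> cantor \<Rightarrow> cantor" where
  "flip \<mu> X = (\<lambda>n. X n \<noteq> \<mu> n)"

lemma flip_flip[simp]: "flip \<mu> (flip \<mu> X) = X"
  by (auto simp: flip_def)

lemma flip_measurable[measurable]: "flip \<mu> \<in> measurable lambdaC lambdaC"
proof -
  have "(\<lambda>X i. (\<lambda>b. b \<noteq> \<mu> i) (X i)) \<in> measurable lambdaC (PiM UNIV (\<lambda>_. coin))"
  proof (rule measurable_PiM_single')
    fix i :: nat
    show "(\<lambda>X. (\<lambda>b. b \<noteq> \<mu> i) (X i)) \<in> measurable lambdaC coin"
      unfolding lambdaC_def
      by (rule measurable_compose[OF measurable_component_singleton]) auto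
  qed (auto simp: space_PiM)
  then show ?thesis unfolding flip_def lambdaC_def by simp
qed

lemma emeasure_coin_flip: "emeasure coin ((\<lambda>b. b \<noteq> c) -` A) = emeasure coin A"
proof -
  have "card ((\<lambda>b. b \<noteq> c) -` A) = card A"
  proof (rule bij_betw_same_card)
    show "bij_betw (\<lambda>b. b \<noteq> c) ((\<lambda>b. b \<noteq> c) -` A) A"
      by (rule bij_betwI[where g="\<lambda>b. b \<noteq> c"]) auto
  qed
  then show ?thesis by (simp add: emeasure_pmf_of_set)
qed

lemma distr_flip: "distr lambdaC lambdaC (flip \<mu>) = lambdaC"
proof -
  have eq: "emeasure lambdaC (prod_emb UNIV (\<lambda>_. coin) J (Pi\<^sub>E J A)) =
            emeasure (distr lambdaC lambdaC (flip \<mu>)) (prod_emb UNIV (\<lambda>_. coin) J (Pi\<^sub>E J A))"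
    if J: "finite J" for J A
  proof -
    have preimage: "flip \<mu> -` prod_emb UNIV (\<lambda>_. coin) J (Pi\<^sub>E J A) \<inter> space lambdaC =
        prod_emb UNIV (\<lambda>_. coin) J (Pi\<^sub>E J (\<lambda>i. (\<lambda>b. b \<noteq> \<mu> i) -` A i))"
      by (auto simp: prod_emb_def space_PiM PiE_iff flip_def)
    have "emeasure (distr lambdaC lambdaC (flip \<mu>)) (prod_emb UNIV (\<lambda>_. coin) J (Pi\<^sub>E J A))
       = emeasure lambdaC (flip \<mu> -` prod_emb UNIV (\<lambda>_. coin) J (Pi\<^sub>E J A) \<inter> space lambdaC)"
      by (rule emeasure_distr[OF flip_measurable]) (use J in \<open>auto simp: lambdaC_def intro!: sets_PiM_I_finite measurable_prod_emb\<close>)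
    also have "\<dots> = (\<Prod>i\<in>J. emeasure coin ((\<lambda>b. b \<noteq> \<mu> i) -` A i))"
      unfolding preimage unfolding lambdaC_def by (rule emeasure_PiM_emb) (use J prob_space_coin in auto)
    also have "\<dots> = (\<Prod>i\<in>J. emeasure coin (A i))" by (rule prod.cong[OF refl emeasure_coin_flip])
    also have "\<dots> = emeasure lambdaC (prod_emb UNIV (\<lambda>_. coin) J (Pi\<^sub>E J A))"
      unfolding lambdaC_def by (rule emeasure_PiM_emb[symmetric]) (use J prob_space_coin in auto)
    finally show ?thesis ..
  qed
  show ?thesis
    apply (rule measure_eqI_PiM_infinite[where I=UNIV and M="\<lambda>_. coin"])
       apply (simp add: lambdaC_def)
      apply (simp add: lambdaC_def)
     apply (rule eq[symmetric], assumption)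
    using uniform.prob_space_distr[OF flip_measurable] by (rule prob_space.axioms(1))
qed

lemma measure_flip: "T \<in> sets lambdaC \<Longrightarrow> measure lambdaC (flip \<mu> -` T) = measure lambdaC T"
proof -
  assume T: "T \<in> sets lambdaC"
  have "measure lambdaC T = measure (distr lambdaC lambdaC (flip \<mu>)) T" by (simp add: distr_flip)
  also have "\<dots> = measure lambdaC (flip \<mu> -` T \<inter> space lambdaC)" by (rule measure_distr[OF flip_measurable T])
  finally show ?thesis by simp
qed

section \<open>Three properties of ML-random sequences\<close>

definition zero_ext :: "bool list \<Rightarrow> cantor" where
  "zero_ext \<tau> = (\<lambda>i. i < length \<tau> \<and> \<tau> ! i)"

lemma zero_ext_in_cyl: "zero_ext \<tau> \<in> cyl (\<tau> @ replicate n False)"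
  by (auto simp: cyl_def zero_ext_def nth_append)

lemma mltest_zero_ext_cyls: "mltest (\<lambda>n. cyl (\<tau> @ replicate n False))"
proof -
  define M where "M = nat_of_bits \<tau>"
  define P where "P i N l s \<longleftrightarrow> length \<tau> + i \<le> l \<and>
      (\<forall>k<length \<tau> + i. odd (N div 2 ^ k) = (k < length \<tau> \<and> odd (M div 2 ^ k)))" for i N l s :: nat
  have B: "rec_pred (Suc 4) (\<lambda>p ys. odd (ys ! 2 div 2 ^ (ys ! 0)) = (ys ! 0 < length \<tau> \<and> odd (M div 2 ^ (ys ! 0))))"
    by (intro rf_intros) auto
  have "rec_pred 4 (\<lambda>p xs. length \<tau> + xs ! 0 \<le> xs ! 2 \<and> (\<forall>k<length \<tau> + xs ! 0.
      (\<lambda>p ys. odd (ys ! 2 div 2 ^ (ys ! 0)) = (ys ! 0 < length \<tau> \<and> odd (M div 2 ^ (ys ! 0)))) p (k # xs)))"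
    by (intro rp_and rp_ball[OF B] rf_intros) auto
  then have rec: "rec_pred 4 (\<lambda>p xs. P (xs ! 0) (xs ! 1) (xs ! 2) (xs ! 3))" by (simp add: P_def)
  have sound: "cyl (bits_of_nat N l) \<subseteq> cyl (\<tau> @ replicate i False)" if "P i N l s" for i N l s
  proof -
    have "take (length \<tau> + i) (bits_of_nat N l) = \<tau> @ replicate i False"
      using that by (intro nth_equalityI) (auto simp: P_def M_def bit_nat_of_bits nth_append)
    then show ?thesis using that by (simp add: cyl_subset P_def)
  qed
  have complete: "P i (nat_of_bits \<sigma>) (length \<sigma>) 0" if "cyl \<sigma> \<subseteq> cyl (\<tau> @ replicate i False)" for i \<sigma>
  proof -
    from that have l: "length \<tau> + i \<le> length \<sigma>" and t: "take (length \<tau> + i) \<sigma> = \<tau> @ replicate i False"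
      unfolding cyl_subset by auto
    have "\<sigma> ! k = (\<tau> @ replicate i False) ! k" if "k < length \<tau> + i" for k
      using t that by (metis nth_take)
    then show ?thesis using l by (auto simp: P_def M_def bit_nat_of_bits nth_append)
  qed
  show ?thesis unfolding mltest_def
  proof (intro conjI allI)
    fix n show "open_cantor (cyl (\<tau> @ replicate n False))" by (rule open_cantorI) blast
    show "measure lambdaC (cyl (\<tau> @ replicate n False)) \<le> (1/2) ^ n"
      unfolding measure_cyl by (simp add: power_decreasing)
  next
    show "ce {prod_encode (i, str_code \<sigma>) | i \<sigma>. cyl \<sigma> \<subseteq> cyl (\<tau> @ replicate i False)}"
      by (rule ce_cylinder_codes[where P=P, OF rec]) (use sound complete in blast)+
  qed
qed

lemma zero_ext_in_universal:
  assumes "universal_mltest U"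
  shows "zero_ext \<tau> \<in> U j"
  using assms mltest_zero_ext_cyls[of \<tau>] zero_ext_in_cyl[of \<tau>]
  unfolding universal_mltest_def by blast

definition flip_list :: "cantor \<Rightarrow> bool list \<Rightarrow> bool list" where
  "flip_list \<mu> \<sigma> = map (\<lambda>i. \<sigma> ! i \<noteq> \<mu> i) [0..<length \<sigma>]"

lemma flip_in_cyl: "flip \<mu> Z \<in> cyl (flip_list \<mu> \<sigma>) \<longleftrightarrow> Z \<in> cyl \<sigma>"
  by (auto simp: cyl_def flip_list_def flip_def)

lemma cyl_flip_subset: "cyl \<sigma> \<subseteq> flip \<mu> -` A \<longleftrightarrow> cyl (flip_list \<mu> \<sigma>) \<subseteq> A"
proof
  assume a: "cyl \<sigma> \<subseteq> flip \<mu> -` A"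
  show "cyl (flip_list \<mu> \<sigma>) \<subseteq> A"
  proof
    fix Y assume "Y \<in> cyl (flip_list \<mu> \<sigma>)"
    then have "flip \<mu> (flip \<mu> Y) \<in> cyl (flip_list \<mu> \<sigma>)" by simp
    then have "flip \<mu> Y \<in> cyl \<sigma>" by (simp only: flip_in_cyl)
    then have "flip \<mu> (flip \<mu> Y) \<in> A" using a by blast
    then show "Y \<in> A" by simp
  qed
next
  assume "cyl (flip_list \<mu> \<sigma>) \<subseteq> A"
  then show "cyl \<sigma> \<subseteq> flip \<mu> -` A" using flip_in_cyl by blast
qed

lemma open_flip_preimage:
  assumes "open_cantor T"
  shows "open_cantor (flip \<mu> -` T)"
  unfolding open_cantor_iff_init_seg
proof
  fix Z assume "Z \<in> flip \<mu> -` T"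
  then obtain m where m: "cyl (init_seg (flip \<mu> Z) m) \<subseteq> T" using assms open_cantorD by blast
  have "flip_list \<mu> (init_seg Z m) = init_seg (flip \<mu> Z) m"
    by (auto simp: flip_list_def init_seg_def flip_def)
  then have "cyl (init_seg Z m) \<subseteq> flip \<mu> -` T" using m unfolding cyl_flip_subset by simp
  then show "\<exists>m. cyl (init_seg Z m) \<subseteq> flip \<mu> -` T" by blast
qed

lemma mltest_flip_preimage:
  assumes T: "mltest T" and fin: "finite {i. \<mu> i}"
  shows "mltest (\<lambda>n. flip \<mu> -` T n)"
proof -
  have openT: "open_cantor (T n)" for n using T by (simp add: mltest_def)
  obtain R where R: "rec_fn 2 (\<lambda>p xs. R (xs ! 0) (xs ! 1))"
    and Rc: "\<And>j \<rho>. cyl \<rho> \<subseteq> T j \<longleftrightarrow> (\<exists>s. R (prod_encode (j, str_code \<rho>)) s \<noteq> 0)"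
    using mltest_step_function[OF T] by metis
  obtain Mu :: nat where Mu: "\<forall>i. \<mu> i = odd (Mu div 2 ^ i)" using finite_set_bit_code[OF fin] by blast
  define P where "P i N l s \<longleftrightarrow>
      R (prod_encode (i, str_code (map (\<lambda>k. odd (N div 2 ^ k) \<noteq> odd (Mu div 2 ^ k)) [0..<l]))) s \<noteq> 0"
    for i N l s :: nat
  have B: "rec_pred (Suc 4) (\<lambda>p ys. odd (ys ! 2 div 2 ^ (ys ! 0)) \<noteq> odd (Mu div 2 ^ (ys ! 0)))"
    by (intro rp_not rf_intros) auto
  have "rec_pred 4 (\<lambda>p xs. R (prod_encode (xs ! 0, str_code (map (\<lambda>k.
      (\<lambda>p ys. odd (ys ! 2 div 2 ^ (ys ! 0)) \<noteq> odd (Mu div 2 ^ (ys ! 0))) p (k # xs)) [0..<xs ! 2]))) (xs ! 3) \<noteq> 0)"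
    by (intro rp_nz rf_app2[OF R] rf_str_code[OF B] rf_intros) auto
  then have rec: "rec_pred 4 (\<lambda>p xs. P (xs ! 0) (xs ! 1) (xs ! 2) (xs ! 3))" by (simp add: P_def)
  have flip_bits: "flip_list \<mu> (bits_of_nat N l) = map (\<lambda>k. odd (N div 2 ^ k) \<noteq> odd (Mu div 2 ^ k)) [0..<l]"
    for N l
    using Mu by (auto simp: flip_list_def bits_of_nat_def)
  have sound: "cyl (bits_of_nat N l) \<subseteq> flip \<mu> -` T i" if "P i N l s" for i N l s
    using that Rc unfolding P_def cyl_flip_subset flip_bits[symmetric] by blast
  have complete: "\<exists>s. P i (nat_of_bits \<sigma>) (length \<sigma>) s" if "cyl \<sigma> \<subseteq> flip \<mu> -` T i" for i \<sigma>
    using that Rc flip_bits[of "nat_of_bits \<sigma>" "length \<sigma>"]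
    unfolding P_def cyl_flip_subset by (simp add: bits_of_nat_of_bits)
  show ?thesis unfolding mltest_def
  proof (intro conjI allI)
    fix n show "open_cantor (flip \<mu> -` T n)" by (rule open_flip_preimage[OF openT])
    have "measure lambdaC (flip \<mu> -` T n) = measure lambdaC (T n)"
      by (rule measure_flip[OF open_sets[OF openT]])
    then show "measure lambdaC (flip \<mu> -` T n) \<le> (1/2) ^ n" using T by (simp add: mltest_def)
  next
    show "ce {prod_encode (i, str_code \<sigma>) | i \<sigma>. cyl \<sigma> \<subseteq> flip \<mu> -` T i}"
      by (rule ce_cylinder_codes[where P=P, OF rec]) (use sound complete in blast)+
  qed
qed

lemma MLR_flip:
  assumes X: "X \<in> MLR" and fin: "finite {i. \<mu> i}"
  shows "flip \<mu> X \<in> MLR"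
  unfolding MLR_def
proof (intro CollectI allI impI notI)
  fix T assume "mltest T" "flip \<mu> X \<in> (\<Inter>i. T i)"
  then have "mltest (\<lambda>n. flip \<mu> -` T n)" "X \<in> (\<Inter>n. flip \<mu> -` T n)"
    using mltest_flip_preimage[OF _ fin] by auto
  then show False using X unfolding MLR_def by blast
qed

lemma MLR_eventually_eq:
  assumes X: "X \<in> MLR" and eq: "\<And>t. t0 \<le> t \<Longrightarrow> Y t = X t"
  shows "Y \<in> MLR"
proof -
  define \<mu> where "\<mu> i = (i < t0 \<and> Y i \<noteq> X i)" for i
  have "finite {i. \<mu> i}" by (rule finite_subset[of _ "{..<t0}"]) (auto simp: \<mu>_def)
  then have "flip \<mu> X \<in> MLR" by (rule MLR_flip[OF X])
  moreover have "flip \<mu> X = Y"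
  proof
    fix i show "flip \<mu> X i = Y i"
      using eq[of i] by (cases "i < t0") (auto simp: flip_def \<mu>_def)
  qed
  ultimately show ?thesis by simp
qed

locale stagewise_cover =
  fixes W :: "bool list \<Rightarrow> nat \<Rightarrow> bool"
  assumes mono: "W \<rho> s \<Longrightarrow> s \<le> s' \<Longrightarrow> W \<rho> s'"
begin

definition finitely_covered :: "bool list \<Rightarrow> bool" where
  "finitely_covered \<tau> \<longleftrightarrow> (\<exists>M s. length \<tau> \<le> M \<and> (\<forall>\<tau>'. length \<tau>' = M \<and> take (length \<tau>) \<tau>' = \<tau> \<longrightarrow>
       (\<exists>l\<le>M. W (take l \<tau>') s)))"

lemma finitely_covered_single: "W (take l \<tau>) s \<Longrightarrow> l \<le> length \<tau> \<Longrightarrow> finitely_covered \<tau>"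
  unfolding finitely_covered_def by (rule exI[of _ "length \<tau>"], rule exI[of _ s]) auto

lemma finitely_covered_split:
  assumes g0: "finitely_covered (\<tau> @ [False])" and g1: "finitely_covered (\<tau> @ [True])"
  shows "finitely_covered \<tau>"
proof -
  obtain M0 s0 where M0: "Suc (length \<tau>) \<le> M0"
    and c0: "\<And>\<tau>'. length \<tau>' = M0 \<Longrightarrow> take (Suc (length \<tau>)) \<tau>' = \<tau> @ [False] \<Longrightarrow> \<exists>l\<le>M0. W (take l \<tau>') s0"
    using g0 unfolding finitely_covered_def by auto
  obtain M1 s1 where M1: "Suc (length \<tau>) \<le> M1"
    and c1: "\<And>\<tau>'. length \<tau>' = M1 \<Longrightarrow> take (Suc (length \<tau>)) \<tau>' = \<tau> @ [True] \<Longrightarrow> \<exists>l\<le>M1. W (take l \<tau>') s1"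
    using g1 unfolding finitely_covered_def by auto
  show ?thesis unfolding finitely_covered_def
  proof (rule exI[of _ "max M0 M1"], rule exI[of _ "max s0 s1"], intro conjI allI impI)
    show "length \<tau> \<le> max M0 M1" using M0 by simp
    fix \<tau>' assume a: "length \<tau>' = max M0 M1 \<and> take (length \<tau>) \<tau>' = \<tau>"
    then have lt: "length \<tau> < length \<tau>'" using M0 by simp
    define b where "b = \<tau>' ! length \<tau>"
    have tk: "take (Suc (length \<tau>)) \<tau>' = \<tau> @ [b]"
      using a lt by (simp add: take_Suc_conv_app_nth b_def)
    show "\<exists>l\<le>max M0 M1. W (take l \<tau>') (max s0 s1)"
    proof (cases b)
      case True
      let ?t = "take M1 \<tau>'"
      have "length ?t = M1" using a by simp
      moreover have "take (Suc (length \<tau>)) ?t = \<tau> @ [True]" using tk True M1 by (simp add: min_def)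
      ultimately obtain l where l: "l \<le> M1" "W (take l ?t) s1" using c1 by blast
      then have "W (take l \<tau>') (max s0 s1)" using mono by (simp add: min_def)
      then show ?thesis using l by (intro exI[of _ l]) auto
    next
      case False
      let ?t = "take M0 \<tau>'"
      have "length ?t = M0" using a by simp
      moreover have "take (Suc (length \<tau>)) ?t = \<tau> @ [False]" using tk False M0 by (simp add: min_def)
      ultimately obtain l where l: "l \<le> M0" "W (take l ?t) s0" using c0 by blast
      then have "W (take l \<tau>') (max s0 s1)" using mono by (simp add: min_def)
      then show ?thesis using l by (intro exI[of _ l]) auto
    qed
  qed
qed

text \<open>If \<open>\<sigma>\<close> is not finitely covered, one of its two one-bit extensions is not either:
  following the leftmost such extension yields a path through \<open>cyl \<sigma>\<close> that \<open>W\<close> never covers.\<close>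

primrec branch :: "bool list \<Rightarrow> nat \<Rightarrow> bool list" where
  "branch \<sigma> 0 = \<sigma>"
| "branch \<sigma> (Suc m) = (if finitely_covered (branch \<sigma> m @ [False]) then branch \<sigma> m @ [True] else branch \<sigma> m @ [False])"

lemma length_branch: "length (branch \<sigma> m) = length \<sigma> + m"
  by (induction m) auto

lemma branch_not_covered: "\<not> finitely_covered \<sigma> \<Longrightarrow> \<not> finitely_covered (branch \<sigma> m)"
proof (induction m)
  case (Suc m)
  show ?case
  proof (cases "finitely_covered (branch \<sigma> m @ [False])")
    case True
    then have "\<not> finitely_covered (branch \<sigma> m @ [True])" using finitely_covered_split Suc by blast
    then show ?thesis using True by simp
  next
    case False then show ?thesis by simp
  qed
qed simp

lemma take_branch: "take (length (branch \<sigma> m)) (branch \<sigma> (m + k)) = branch \<sigma> m"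
proof (induction k)
  case (Suc k)
  have "length (branch \<sigma> m) \<le> length (branch \<sigma> (m + k))" by (simp add: length_branch)
  then have "take (length (branch \<sigma> m)) (branch \<sigma> (m + k) @ [b]) = take (length (branch \<sigma> m)) (branch \<sigma> (m + k))" for b
    by simp
  then show ?case using Suc by simp
qed simp

lemma nth_branch: "i < length (branch \<sigma> a) \<Longrightarrow> i < length (branch \<sigma> b) \<Longrightarrow> branch \<sigma> a ! i = branch \<sigma> b ! i"
proof -
  assume i: "i < length (branch \<sigma> a)" "i < length (branch \<sigma> b)"
  have "branch \<sigma> a ! i = take (length (branch \<sigma> a)) (branch \<sigma> (a + b)) ! i" using take_branch[of \<sigma> a b] by simp
  also have "\<dots> = branch \<sigma> (a + b) ! i" using i(1) by (rule nth_take)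
  also have "\<dots> = take (length (branch \<sigma> b)) (branch \<sigma> (b + a)) ! i" using i(2) by (simp add: add.commute)
  also have "\<dots> = branch \<sigma> b ! i" using take_branch[of \<sigma> b a] by simp
  finally show ?thesis .
qed

lemma finitely_covered_if_covered:
  assumes cov: "\<forall>Z\<in>cyl \<sigma>. \<exists>l s. W (init_seg Z l) s"
  shows "finitely_covered \<sigma>"
proof (rule ccontr)
  assume bad: "\<not> finitely_covered \<sigma>"
  define Z where "Z i = branch \<sigma> (Suc i) ! i" for i
  have init_seg_Z: "init_seg Z (length \<sigma> + m) = branch \<sigma> m" for m
  proof (rule nth_equalityI)
    show "length (init_seg Z (length \<sigma> + m)) = length (branch \<sigma> m)" by (simp add: length_branch)
    fix i assume "i < length (init_seg Z (length \<sigma> + m))"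
    then have i: "i < length \<sigma> + m" by simp
    have "branch \<sigma> (Suc i) ! i = branch \<sigma> m ! i" by (rule nth_branch) (use i in \<open>auto simp: length_branch\<close>)
    then show "init_seg Z (length \<sigma> + m) ! i = branch \<sigma> m ! i"
      using i by (simp add: Z_def)
  qed
  have "Z \<in> cyl \<sigma>" using init_seg_Z[of 0] by (simp add: in_cyl)
  then obtain l s where W: "W (init_seg Z l) s" using cov by blast
  have "take l (init_seg Z (length \<sigma> + l)) = init_seg Z l"
    by (intro nth_equalityI) auto
  then have "take l (branch \<sigma> l) = init_seg Z l" using init_seg_Z[of l] by simp
  then have "finitely_covered (branch \<sigma> l)" using W by (intro finitely_covered_single[of l _ s]) (auto simp: length_branch)
  then show False using branch_not_covered[OF bad] by blast
qed

end

definition stage_covers :: "(nat \<Rightarrow> nat \<Rightarrow> nat) \<Rightarrow> nat \<Rightarrow> nat \<Rightarrow> nat \<Rightarrow> nat \<Rightarrow> nat \<Rightarrow> bool" where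
  "stage_covers R n N l M s \<longleftrightarrow> l \<le> M \<and> (\<forall>N'<2 ^ M. (\<forall>k<l. odd (N' div 2 ^ k) = odd (N div 2 ^ k)) \<longrightarrow>
     (\<exists>l'<Suc M. \<exists>j<Suc s. n < j \<and> R (prod_encode (j, str_code (bits_of_nat N' l'))) s \<noteq> 0))"

lemma rp_stage_covers:
  assumes R: "rec_fn 2 (\<lambda>p xs. R (xs ! 0) (xs ! 1))"
  shows "rec_pred 4 (\<lambda>p xs. stage_covers R (xs ! 0) (xs ! 1) (xs ! 2) (unpair1 (xs ! 3)) (unpair2 (xs ! 3)))"
proof -
  define E where "E = (\<lambda>(p::nat \<Rightarrow> nat) us. us ! 3 < us ! 0 \<and>
    R (prod_encode (us ! 0, str_code (bits_of_nat (us ! 2) (us ! 1)))) (unpair2 (us ! 6)) \<noteq> 0)"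
  define J where "J = (\<lambda>p zs. \<exists>j<Suc (unpair2 (zs ! 5)). E p (j # zs))"
  define A where "A = (\<lambda>(p::nat \<Rightarrow> nat) zs. odd (zs ! 1 div 2 ^ (zs ! 0)) = odd (zs ! 3 div 2 ^ (zs ! 0)))"
  define X where "X = (\<lambda>p ys. (\<forall>k<ys ! 3. A p (k # ys)) \<longrightarrow> (\<exists>l'<Suc (unpair1 (ys ! 4)). J p (l' # ys)))"
  have E: "rec_pred (Suc (Suc (Suc 4))) E" unfolding E_def
    by (intro rp_and rp_nz rf_app2[OF R] rf_intros) auto
  have J: "rec_pred (Suc (Suc 4)) J" unfolding J_def
    by (intro rp_bex[OF E] rf_intros) auto
  have A: "rec_pred (Suc (Suc 4)) A" unfolding A_def by (intro rf_intros) auto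
  have X: "rec_pred (Suc 4) X" unfolding X_def
    by (intro rp_imp rp_ball[OF A] rp_bex[OF J] rf_intros) auto
  have "rec_pred 4 (\<lambda>p xs. xs ! 2 \<le> unpair1 (xs ! 3) \<and> (\<forall>N'<2 ^ unpair1 (xs ! 3). X p (N' # xs)))"
    by (intro rp_and rp_ball[OF X] rf_intros) auto
  then show ?thesis by (simp add: stage_covers_def X_def J_def E_def A_def)
qed

lemma stage_covers_sound:
  assumes Rc: "\<And>j \<rho>. cyl \<rho> \<subseteq> V j \<longleftrightarrow> (\<exists>s. R (prod_encode (j, str_code \<rho>)) s \<noteq> 0)"
    and cov: "stage_covers R n N l M s"
  shows "cyl (bits_of_nat N l) \<subseteq> (\<Union>j\<in>{n<..}. V j)"
proof
  fix Z assume Z: "Z \<in> cyl (bits_of_nat N l)"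
  define N' where "N' = nat_of_bits (init_seg Z M)"
  have lM: "l \<le> M" using cov by (simp add: stage_covers_def)
  have "N' < 2 ^ M" unfolding N'_def using nat_of_bits_less[of "init_seg Z M"] by simp
  moreover have "\<forall>k<l. odd (N' div 2 ^ k) = odd (N div 2 ^ k)"
  proof (intro allI impI)
    fix k assume k: "k < l"
    have "Z k = bits_of_nat N l ! k" using Z k unfolding cyl_def by simp
    then show "odd (N' div 2 ^ k) = odd (N div 2 ^ k)" using k lM by (simp add: N'_def bit_nat_of_bits)
  qed
  ultimately obtain l' j where l': "l' \<le> M" "n < j"
    "R (prod_encode (j, str_code (bits_of_nat N' l'))) s \<noteq> 0"
    using cov unfolding stage_covers_def less_Suc_eq_le by blast
  then have "cyl (bits_of_nat N' l') \<subseteq> V j" using Rc by blast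
  moreover have "bits_of_nat N' l' = init_seg Z l'"
  proof -
    have "bits_of_nat N' l' = take l' (bits_of_nat N' M)" using l' by (simp add: take_bits_of_nat)
    also have "bits_of_nat N' M = init_seg Z M"
      unfolding N'_def using bits_of_nat_of_bits[of "init_seg Z M"] by simp
    finally show ?thesis using l' by (intro nth_equalityI) auto
  qed
  ultimately have "Z \<in> V j" using in_cyl_init_seg[of Z l'] by auto
  then show "Z \<in> (\<Union>j\<in>{n<..}. V j)" using l' by auto
qed

text \<open>Compactness: a cylinder covered by the levels beyond \<open>n\<close> is covered by finitely many
  cylinders enumerated by a single stage.\<close>

lemma stage_covers_complete:
  assumes openV: "\<And>j. open_cantor (V j)"
    and Rc: "\<And>j \<rho>. cyl \<rho> \<subseteq> V j \<longleftrightarrow> (\<exists>s. R (prod_encode (j, str_code \<rho>)) s \<noteq> 0)"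
    and Rm: "\<And>x s s'. s \<le> s' \<Longrightarrow> R x s \<noteq> 0 \<Longrightarrow> R x s' \<noteq> 0"
    and sub: "cyl \<sigma> \<subseteq> (\<Union>j\<in>{n<..}. V j)"
  shows "\<exists>M s. stage_covers R n (nat_of_bits \<sigma>) (length \<sigma>) M s"
proof -
  define W where "W \<rho> s \<longleftrightarrow> (\<exists>j<Suc s. n < j \<and> R (prod_encode (j, str_code \<rho>)) s \<noteq> 0)" for \<rho> s
  interpret stagewise_cover W
  proof
    fix \<rho> s s' assume "W \<rho> s" "s \<le> s'"
    then show "W \<rho> s'" unfolding W_def using Rm by (meson le_trans less_Suc_eq_le)
  qed
  have "\<exists>l s. W (init_seg Z l) s" if Z: "Z \<in> cyl \<sigma>" for Z
  proof -
    obtain j where j: "n < j" "Z \<in> V j" using sub Z by auto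
    then obtain m where "cyl (init_seg Z m) \<subseteq> V j" using openV open_cantorD by blast
    then obtain s where "R (prod_encode (j, str_code (init_seg Z m))) s \<noteq> 0" using Rc by blast
    then have "R (prod_encode (j, str_code (init_seg Z m))) (max s j) \<noteq> 0" by (rule Rm[rotated]) simp
    then have "W (init_seg Z m) (max s j)" unfolding W_def using j by (intro exI[of _ j]) auto
    then show ?thesis by blast
  qed
  then have "finitely_covered \<sigma>" by (intro finitely_covered_if_covered) blast
  then obtain M s where M: "length \<sigma> \<le> M"
    and c: "\<And>\<tau>'. length \<tau>' = M \<Longrightarrow> take (length \<sigma>) \<tau>' = \<sigma> \<Longrightarrow> \<exists>l\<le>M. W (take l \<tau>') s"
    unfolding finitely_covered_def by blast
  have "stage_covers R n (nat_of_bits \<sigma>) (length \<sigma>) M s"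
    unfolding stage_covers_def
  proof (intro conjI allI impI)
    show "length \<sigma> \<le> M" by (rule M)
    fix N' :: nat assume ag: "\<forall>k<length \<sigma>. odd (N' div 2 ^ k) = odd (nat_of_bits \<sigma> div 2 ^ k)"
    have "take (length \<sigma>) (bits_of_nat N' M) = bits_of_nat N' (length \<sigma>)" using M by (rule take_bits_of_nat)
    also have "\<dots> = bits_of_nat (nat_of_bits \<sigma>) (length \<sigma>)" using ag by (intro bits_of_nat_eqI) auto
    finally have "take (length \<sigma>) (bits_of_nat N' M) = \<sigma>" by (simp add: bits_of_nat_of_bits)
    then obtain l where l: "l \<le> M" "W (take l (bits_of_nat N' M)) s" using c[of "bits_of_nat N' M"] by auto
    then obtain j where "j < Suc s" "n < j" "R (prod_encode (j, str_code (bits_of_nat N' l))) s \<noteq> 0"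
      by (auto simp: W_def take_bits_of_nat)
    then show "\<exists>l'<Suc M. \<exists>j<Suc s. n < j \<and> R (prod_encode (j, str_code (bits_of_nat N' l'))) s \<noteq> 0"
      using l by (intro exI[of _ l]) auto
  qed
  then show ?thesis by blast
qed

lemma measure_tail_union:
  assumes sets: "\<And>j. V j \<in> sets lambdaC" and bnd: "\<And>j. measure lambdaC (V j) \<le> (1/2) ^ j"
  shows "measure lambdaC (\<Union>j\<in>{n<..}. V j) \<le> (1/2) ^ n"
proof -
  have tail: "(\<Union>j\<in>{n<..}. V j) = (\<Union>i. V (i + Suc n))"
  proof (intro equalityI subsetI)
    fix Z assume "Z \<in> (\<Union>j\<in>{n<..}. V j)"
    then obtain j where "n < j" "Z \<in> V j" by auto
    then have "Z \<in> V ((j - Suc n) + Suc n)" by simp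
    then show "Z \<in> (\<Union>i. V (i + Suc n))" by blast
  qed force
  have sg: "summable (\<lambda>i. (1/2::real) ^ (i + Suc n))"
    by (simp add: power_add summable_geometric summable_mult2)
  have sm: "summable (\<lambda>i. measure lambdaC (V (i + Suc n)))"
    by (rule summable_comparison_test'[OF sg]) (simp only: real_norm_def abs_of_nonneg[OF measure_nonneg] bnd)
  have "measure lambdaC (\<Union>i. V (i + Suc n)) \<le> (\<Sum>i. measure lambdaC (V (i + Suc n)))"
    by (rule uniform.finite_measure_subadditive_countably) (use sets sm in auto)
  also have "\<dots> \<le> (\<Sum>i. (1/2::real) ^ (i + Suc n))" by (rule suminf_le[OF bnd sm sg])
  also have "\<dots> = (\<Sum>i. (1/2::real) ^ i * (1/2) ^ Suc n)" by (simp add: power_add)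
  also have "\<dots> = (\<Sum>i. (1/2::real) ^ i) * (1/2) ^ Suc n"
    by (rule suminf_mult2[symmetric]) (simp add: summable_geometric)
  also have "\<dots> = (1/2) ^ n" by (simp add: suminf_geometric)
  finally show ?thesis unfolding tail .
qed

lemma mltest_tail_union:
  assumes V: "mltest V"
  shows "mltest (\<lambda>n. \<Union>j\<in>{n<..}. V j)"
proof -
  have openV: "open_cantor (V j)" for j using V by (simp add: mltest_def)
  obtain R where R: "rec_fn 2 (\<lambda>p xs. R (xs ! 0) (xs ! 1))"
    and Rc: "\<And>j \<rho>. cyl \<rho> \<subseteq> V j \<longleftrightarrow> (\<exists>s. R (prod_encode (j, str_code \<rho>)) s \<noteq> 0)"
    and Rm: "\<And>x s s'. s \<le> s' \<Longrightarrow> R x s \<noteq> 0 \<Longrightarrow> R x s' \<noteq> 0"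
    using mltest_step_function[OF V] by blast
  show ?thesis unfolding mltest_def
  proof (intro conjI allI)
    fix n
    show "open_cantor (\<Union>j\<in>{n<..}. V j)" unfolding open_cantor_iff_init_seg
    proof
      fix Z assume "Z \<in> (\<Union>j\<in>{n<..}. V j)"
      then obtain j where "n < j" "Z \<in> V j" by auto
      moreover obtain m where "cyl (init_seg Z m) \<subseteq> V j" using openV open_cantorD \<open>Z \<in> V j\<close> by blast
      ultimately show "\<exists>m. cyl (init_seg Z m) \<subseteq> (\<Union>j\<in>{n<..}. V j)" by auto
    qed
    show "measure lambdaC (\<Union>j\<in>{n<..}. V j) \<le> (1/2) ^ n"
      by (rule measure_tail_union) (use V open_sets in \<open>auto simp: mltest_def\<close>)
  next
    have "ce {prod_encode (i, str_code \<sigma>) | i \<sigma>. cyl \<sigma> \<subseteq> (\<Union>j\<in>{i<..}. V j)}"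
    proof (rule ce_cylinder_codes[OF rp_stage_covers[OF R]])
      fix i N l w assume "stage_covers R i N l (unpair1 w) (unpair2 w)"
      then show "cyl (bits_of_nat N l) \<subseteq> (\<Union>j\<in>{i<..}. V j)" by (rule stage_covers_sound[OF Rc])
    next
      fix i \<sigma> assume sub: "cyl \<sigma> \<subseteq> (\<Union>j\<in>{i<..}. V j)"
      have "\<exists>M s. stage_covers R i (nat_of_bits \<sigma>) (length \<sigma>) M s"
        by (rule stage_covers_complete[where V=V and R=R, OF openV Rc _ sub]) (fact Rm)
      then obtain M s where "stage_covers R i (nat_of_bits \<sigma>) (length \<sigma>) M s" by blast
      then show "\<exists>w. stage_covers R i (nat_of_bits \<sigma>) (length \<sigma>) (unpair1 w) (unpair2 w)"
        by (intro exI[of _ "prod_encode (M, s)"]) simp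
    qed
    then show "ce {prod_encode (i, str_code \<sigma>) | i \<sigma>. cyl \<sigma> \<subseteq> (\<Union>j\<in>{i<..}. V j)}" .
  qed
qed

lemma MLR_finitely_many_levels:
  assumes V: "mltest V" and X: "X \<in> MLR"
  shows "finite {j. X \<in> V j}"
proof (rule ccontr)
  assume "infinite {j. X \<in> V j}"
  then have "X \<in> (\<Inter>n. \<Union>j\<in>{n<..}. V j)" by (auto simp: infinite_nat_iff_unbounded)
  then show False using X mltest_tail_union[OF V] unfolding MLR_def by blast
qed

section \<open>The reduction\<close>

definition V_seen :: "(nat \<Rightarrow> nat \<Rightarrow> nat) \<Rightarrow> (nat \<Rightarrow> nat) \<Rightarrow> nat \<Rightarrow> nat \<Rightarrow> bool" where
  "V_seen RV p j t \<longleftrightarrow> (\<exists>l<Suc t. RV (prod_encode (j, str_code (init_seg (\<lambda>i. p i \<noteq> 0) l))) t \<noteq> 0)"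

definition U_seen :: "(nat \<Rightarrow> nat \<Rightarrow> nat) \<Rightarrow> nat \<Rightarrow> nat \<Rightarrow> nat \<Rightarrow> bool" where
  "U_seen RU j t B \<longleftrightarrow> (\<exists>l<Suc t. RU (prod_encode (j, str_code (bits_of_nat B l))) t \<noteq> 0)"

definition restrained :: "(nat \<Rightarrow> nat \<Rightarrow> nat) \<Rightarrow> (nat \<Rightarrow> nat \<Rightarrow> nat) \<Rightarrow> (nat \<Rightarrow> nat) \<Rightarrow> nat \<Rightarrow> nat \<Rightarrow> bool" where
  "restrained RV RU p t B \<longleftrightarrow> (\<exists>j<t. V_seen RV p j t \<and> \<not> U_seen RU j t B)"

definition out_code :: "(nat \<Rightarrow> nat \<Rightarrow> nat) \<Rightarrow> (nat \<Rightarrow> nat \<Rightarrow> nat) \<Rightarrow> (nat \<Rightarrow> nat) \<Rightarrow> nat \<Rightarrow> nat" where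
  "out_code RV RU p t = prim_rec 0 (\<lambda>B t. B + (if restrained RV RU p t B then 0 else of_bool (p t \<noteq> 0) * 2 ^ t)) t"

definition out_bit :: "(nat \<Rightarrow> nat \<Rightarrow> nat) \<Rightarrow> (nat \<Rightarrow> nat \<Rightarrow> nat) \<Rightarrow> (nat \<Rightarrow> nat) \<Rightarrow> nat \<Rightarrow> nat" where
  "out_bit RV RU p n = of_bool (odd (out_code RV RU p (Suc n) div 2 ^ n))"

definition out_seq :: "(nat \<Rightarrow> nat \<Rightarrow> nat) \<Rightarrow> (nat \<Rightarrow> nat \<Rightarrow> nat) \<Rightarrow> (nat \<Rightarrow> nat) \<Rightarrow> cantor" where
  "out_seq RV RU p n = odd (out_code RV RU p (Suc n) div 2 ^ n)"

lemma rf_out_bit: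
  assumes RV: "rec_fn 2 (\<lambda>p xs. RV (xs ! 0) (xs ! 1))" and RU: "rec_fn 2 (\<lambda>p xs. RU (xs ! 0) (xs ! 1))"
  shows "rec_fn 1 (\<lambda>p xs. out_bit RV RU p (xs ! 0))"
proof -
  define Vs where "Vs = (\<lambda>(p::nat \<Rightarrow> nat) us. RV (prod_encode (us ! 1, str_code (map (\<lambda>i. p i \<noteq> 0) [0..<us ! 0]))) (us ! 3) \<noteq> 0)"
  define Us where "Us = (\<lambda>(p::nat \<Rightarrow> nat) us. RU (prod_encode (us ! 1, str_code (bits_of_nat (us ! 2) (us ! 0)))) (us ! 3) \<noteq> 0)"
  define Req where "Req = (\<lambda>p zs. (\<exists>l<Suc (zs ! 2). Vs p (l # zs)) \<and> \<not> (\<exists>l<Suc (zs ! 2). Us p (l # zs)))"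
  define H where "H = (\<lambda>p ys. ys ! 0 + (if restrained RV RU p (ys ! 1) (ys ! 0) then 0 else of_bool (p (ys ! 1) \<noteq> 0) * 2 ^ (ys ! 1)))"
  have Vs: "rec_pred (Suc (Suc (Suc (Suc 1)))) Vs" unfolding Vs_def
    by (intro rp_nz rf_app2[OF RV] rf_prod_encode rf_str_code_oracle rf_nth) auto
  have Us: "rec_pred (Suc (Suc (Suc (Suc 1)))) Us" unfolding Us_def
    by (intro rp_nz rf_app2[OF RU] rf_intros) auto
  have Req: "rec_pred (Suc (Suc (Suc 1))) Req" unfolding Req_def
    by (intro rp_and rp_not rp_bex[OF Vs] rp_bex[OF Us] rf_intros) auto
  have "rec_pred (Suc (Suc 1)) (\<lambda>p ys. \<exists>j<ys ! 1. Req p (j # ys))"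
    by (intro rp_bex[OF Req] rf_intros) auto
  then have "rec_pred (Suc (Suc 1)) (\<lambda>p ys. restrained RV RU p (ys ! 1) (ys ! 0))"
    by (rule rp_cong) (simp add: restrained_def V_seen_def U_seen_def Req_def Vs_def Us_def init_seg_def)
  then have "rec_fn (Suc (Suc 1)) H" unfolding H_def
    by (intro rf_add rf_if rf_mult rf_of_bool rp_nz rf_orc rf_pow2 rf_intros) auto
  then have "rec_fn 1 (\<lambda>p xs. prim_rec ((\<lambda>p xs. 0) p xs) (\<lambda>y n. H p (y # n # xs)) (Suc (xs ! 0)))"
    by (rule rf_prim_rec[OF rf_zero]) (intro rf_intros, simp)
  then have "rec_fn 1 (\<lambda>p xs. out_code RV RU p (Suc (xs ! 0)))"
    by (simp add: out_code_def H_def cong: if_cong del: prim_rec.simps)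
  then have "rec_fn 1 (\<lambda>p xs. of_bool (odd (out_code RV RU p (Suc (xs ! 0)) div 2 ^ (xs ! 0))))"
    by (intro rf_of_bool rp_bit rf_intros) auto
  then show ?thesis by (simp add: out_bit_def)
qed

lemma out_code_Suc: "out_code RV RU p (Suc t) = out_code RV RU p t +
   (if restrained RV RU p t (out_code RV RU p t) then 0 else of_bool (p t \<noteq> 0) * 2 ^ t)"
  by (simp add: out_code_def)

lemma out_code_less: "out_code RV RU p t < 2 ^ t"
  by (induction t) (simp_all add: out_code_def[of _ _ _ 0] out_code_Suc)

lemma out_code_bit: "i < t \<Longrightarrow> odd (out_code RV RU p t div 2 ^ i) = out_seq RV RU p i"
proof (induction t)
  case (Suc t)
  define c :: nat where "c = (if restrained RV RU p t (out_code RV RU p t) then 0 else of_bool (p t \<noteq> 0))"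
  have step: "out_code RV RU p (Suc t) = out_code RV RU p t + c * 2 ^ t"
    unfolding out_code_Suc c_def by simp
  show ?case
  proof (cases "i = t")
    case True then show ?thesis by (simp add: out_seq_def)
  next
    case False
    then have it: "i < t" using Suc.prems by simp
    then have "c * 2 ^ t = (c * 2 ^ (t - i)) * 2 ^ i" by (simp add: mult.assoc flip: power_add)
    then have "out_code RV RU p (Suc t) = out_code RV RU p t + (c * 2 ^ (t - i)) * 2 ^ i"
      unfolding step by simp
    then have "out_code RV RU p (Suc t) div 2 ^ i = c * 2 ^ (t - i) + out_code RV RU p t div 2 ^ i"
      by simp
    then show ?thesis using Suc.IH it by simp
  qed
qed simp

lemma bits_of_nat_out_code: "l \<le> t \<Longrightarrow> bits_of_nat (out_code RV RU p t) l = init_seg (out_seq RV RU p) l"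
  by (intro nth_equalityI) (simp_all add: out_code_bit)

lemma out_seq_iff: "out_seq RV RU p t \<longleftrightarrow> \<not> restrained RV RU p t (out_code RV RU p t) \<and> p t \<noteq> 0"
proof -
  have "out_code RV RU p t div 2 ^ t = 0" using out_code_less by simp
  then show ?thesis by (simp add: out_seq_def out_code_Suc)
qed

locale reduction =
  fixes U V :: "nat \<Rightarrow> cantor set" and RU RV :: "nat \<Rightarrow> nat \<Rightarrow> nat"
  assumes U: "universal_mltest U" and V: "mltest V"
    and U_enum: "\<And>j \<rho>. cyl \<rho> \<subseteq> U j \<longleftrightarrow> (\<exists>s. RU (prod_encode (j, str_code \<rho>)) s \<noteq> 0)"
    and U_enum_mono: "\<And>x s s'. s \<le> s' \<Longrightarrow> RU x s \<noteq> 0 \<Longrightarrow> RU x s' \<noteq> 0"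
    and V_enum: "\<And>j \<rho>. cyl \<rho> \<subseteq> V j \<longleftrightarrow> (\<exists>s. RV (prod_encode (j, str_code \<rho>)) s \<noteq> 0)"
    and V_enum_mono: "\<And>x s s'. s \<le> s' \<Longrightarrow> RV x s \<noteq> 0 \<Longrightarrow> RV x s' \<noteq> 0"

begin

abbreviation "Y p \<equiv> out_seq RV RU p"

lemma openU: "open_cantor (U j)" using U by (simp add: universal_mltest_def mltest_def)

lemma openV: "open_cantor (V j)" using V by (simp add: mltest_def)

lemma U_seen_imp: "U_seen RU j t (out_code RV RU p t) \<Longrightarrow> Y p \<in> U j"
  unfolding U_seen_def using U_enum bits_of_nat_out_code in_cyl_init_seg
  by (metis less_Suc_eq_le subsetD)

lemma V_seen_imp: "V_seen RV p j t \<Longrightarrow> (\<lambda>i. p i \<noteq> 0) \<in> V j"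
  unfolding V_seen_def using V_enum in_cyl_init_seg by blast

lemma in_V_imp_out_seq_in_U: assumes "(\<lambda>i. p i \<noteq> 0) \<in> V j" shows "Y p \<in> U j"
proof (rule ccontr)
  assume nY: "Y p \<notin> U j"
  let ?X = "\<lambda>i. p i \<noteq> 0"
  obtain l where "cyl (init_seg ?X l) \<subseteq> V j" using assms openV open_cantorD by blast
  then obtain s where s: "RV (prod_encode (j, str_code (init_seg ?X l))) s \<noteq> 0" using V_enum by blast
  define t0 where "t0 = max (max l s) (Suc j)"
  have restrained: "restrained RV RU p t (out_code RV RU p t)" if t: "t0 \<le> t" for t
  proof -
    have "V_seen RV p j t" unfolding V_seen_def
      using t V_enum_mono[OF _ s, of t] by (intro exI[of _ l]) (auto simp: t0_def)
    moreover have "\<not> U_seen RU j t (out_code RV RU p t)" using U_seen_imp nY by blast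
    moreover have "j < t" using t by (simp add: t0_def)
    ultimately show ?thesis unfolding restrained_def by blast
  qed
  have "Y p = zero_ext (init_seg (Y p) t0)"
  proof
    fix i show "Y p i = zero_ext (init_seg (Y p) t0) i"
    proof (cases "i < t0")
      case True then show ?thesis by (simp add: zero_ext_def)
    next
      case False
      then have "\<not> Y p i" using restrained[of i] out_seq_iff by simp
      then show ?thesis using False by (simp add: zero_ext_def)
    qed
  qed
  then have "Y p \<in> U j" using zero_ext_in_universal[OF U] by metis
  then show False using nY by blast
qed

lemma out_seq_eventually_copies:
  assumes X: "(\<lambda>i. p i \<noteq> 0) \<in> MLR"
  obtains t0 where "\<And>t. t0 \<le> t \<Longrightarrow> Y p t = (p t \<noteq> 0)"
proof -
  define J where "J = {j. (\<lambda>i. p i \<noteq> 0) \<in> V j}"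
  have finJ: "finite J" unfolding J_def by (rule MLR_finitely_many_levels[OF V X])
  have "\<forall>j\<in>J. \<exists>m s. RU (prod_encode (j, str_code (init_seg (Y p) m))) s \<noteq> 0"
  proof
    fix j assume "j \<in> J"
    then have "Y p \<in> U j" using in_V_imp_out_seq_in_U by (simp add: J_def)
    then obtain m where "cyl (init_seg (Y p) m) \<subseteq> U j" using openU open_cantorD by blast
    then show "\<exists>m s. RU (prod_encode (j, str_code (init_seg (Y p) m))) s \<noteq> 0" using U_enum by blast
  qed
  then obtain m s where ms: "\<And>j. j \<in> J \<Longrightarrow> RU (prod_encode (j, str_code (init_seg (Y p) (m j)))) (s j) \<noteq> 0"
    by metis
  define t0 where "t0 = (\<Sum>j\<in>J. m j + s j)"
  have le: "m j + s j \<le> t0" if "j \<in> J" for j unfolding t0_def using that finJ by (intro member_le_sum) auto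
  have free: "\<not> restrained RV RU p t (out_code RV RU p t)" if t: "t0 \<le> t" for t
  proof
    assume "restrained RV RU p t (out_code RV RU p t)"
    then obtain j where j: "V_seen RV p j t" "\<not> U_seen RU j t (out_code RV RU p t)"
      by (auto simp: restrained_def)
    then have jJ: "j \<in> J" using V_seen_imp by (simp add: J_def)
    have "m j \<le> t" "s j \<le> t" using le[OF jJ] t by auto
    then have "RU (prod_encode (j, str_code (bits_of_nat (out_code RV RU p t) (m j)))) t \<noteq> 0"
      using U_enum_mono[OF _ ms[OF jJ], of t] bits_of_nat_out_code[of "m j" t] by simp
    then have "U_seen RU j t (out_code RV RU p t)" unfolding U_seen_def using \<open>m j \<le> t\<close>
      by (intro exI[of _ "m j"]) auto
    then show False using j by blast
  qed
  show ?thesis using that[of t0] free out_seq_iff by simp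
qed

lemma out_seq_MLR:
  assumes "(\<lambda>i. p i \<noteq> 0) \<in> MLR"
  shows "Y p \<in> MLR"
proof -
  obtain t0 where "\<And>t. t0 \<le> t \<Longrightarrow> Y p t = (p t \<noteq> 0)"
    using out_seq_eventually_copies[OF assms] by blast
  then show ?thesis by (rule MLR_eventually_eq[OF assms])
qed

lemma delta_MLR_out_bit:
  assumes "delta_MLR p = Some X"
  shows "(\<lambda>i. p i \<noteq> 0) = X" and "delta_MLR (out_bit RV RU p) = Some (Y p)"
proof -
  have p01: "\<forall>n. p n \<le> 1" and X: "X = (\<lambda>n. p n = 1)" and "X \<in> MLR"
    using assms by (auto simp: delta_MLR_def split: if_splits)
  show pX: "(\<lambda>i. p i \<noteq> 0) = X"
  proof
    fix i show "(p i \<noteq> 0) = X i" unfolding X using p01[rule_format, of i] by linarith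
  qed
  have "Y p \<in> MLR" using out_seq_MLR pX \<open>X \<in> MLR\<close> by simp
  moreover have "(\<lambda>n. out_bit RV RU p n = 1) = Y p" by (auto simp: out_bit_def out_seq_def)
  ultimately show "delta_MLR (out_bit RV RU p) = Some (Y p)"
    unfolding delta_MLR_def by (simp add: out_bit_def)
qed

end

lemma turing_functional_rec_fn:
  assumes "rec_fn 1 (\<lambda>p xs. F p (xs ! 0))"
  shows "turing_functional (\<lambda>p. Some (F p))"
proof -
  obtain e where e: "\<forall>p xs. length xs = 1 \<longrightarrow> eval p e xs (F p (xs ! 0))"
    using assms unfolding rec_fn_def by blast
  show ?thesis unfolding turing_functional_def
    by (rule exI[of _ e]) (auto intro: e[rule_format, of "[_]", simplified])
qed

lemma turing_functional_Some: "turing_functional Some"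
  unfolding turing_functional_def by (rule exI[of _ Orc]) (auto intro: ev_Orc)

lemma sW_le_LAY_if_computable_transform:
  assumes U: "mltest U" and F: "rec_fn 1 (\<lambda>p xs. F p (xs ! 0))"
    and F_MLR: "\<And>p X. delta_MLR p = Some X \<Longrightarrow>
      \<exists>Y. delta_MLR (F p) = Some Y \<and> (\<forall>j. X \<in> V j \<longrightarrow> Y \<in> U j)"
  shows "sW_le delta_MLR delta_nat (LAY V) delta_MLR delta_nat (LAY U)"
  unfolding sW_le_def
proof (intro exI conjI allI impI)
  show "turing_functional (\<lambda>p. Some (F p))" by (rule turing_functional_rec_fn[OF F])
  show "turing_functional Some" by (rule turing_functional_Some)
  fix \<Gamma> assume \<Gamma>: "realizes delta_MLR delta_nat (LAY U) \<Gamma>"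
  show "realizes delta_MLR delta_nat (LAY V) (\<lambda>p. Option.bind (Option.bind (Some (F p)) \<Gamma>) Some)"
    unfolding realizes_def
  proof (intro allI impI)
    fix p X assume "delta_MLR p = Some X \<and> LAY V X \<noteq> {}"
    then obtain Y where Y: "delta_MLR (F p) = Some Y" and UV: "\<forall>j. X \<in> V j \<longrightarrow> Y \<in> U j"
      using F_MLR by blast
    have "Y \<in> MLR" using Y by (auto simp: delta_MLR_def split: if_splits)
    then have "LAY U Y \<noteq> {}" using U unfolding MLR_def LAY_def by blast
    then obtain q j where "\<Gamma> (F p) = Some q" "delta_nat q = Some j" "j \<in> LAY U Y"
      using \<Gamma> Y unfolding realizes_def by blast
    moreover have "j \<in> LAY V X" using UV \<open>j \<in> LAY U Y\<close> by (auto simp: LAY_def)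
    ultimately show "\<exists>q y. Option.bind (Option.bind (Some (F p)) \<Gamma>) Some = Some q \<and>
        delta_nat q = Some y \<and> y \<in> LAY V X" by auto
  qed
qed

theorem proposition5p2:
  assumes "universal_mltest U" and "universal_mltest V"
  shows "sW_le delta_MLR delta_nat (LAY V) delta_MLR delta_nat (LAY U)"
proof -
  have U_test: "mltest U" and V_test: "mltest V" using assms by (auto simp: universal_mltest_def)
  obtain RU where RU: "rec_fn 2 (\<lambda>p xs. RU (xs ! 0) (xs ! 1))"
    and "\<And>j \<rho>. cyl \<rho> \<subseteq> U j \<longleftrightarrow> (\<exists>s. RU (prod_encode (j, str_code \<rho>)) s \<noteq> 0)"
    and "\<And>x s s'. s \<le> s' \<Longrightarrow> RU x s \<noteq> 0 \<Longrightarrow> RU x s' \<noteq> 0"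
    using mltest_step_function[OF U_test] by blast
  moreover obtain RV where RV: "rec_fn 2 (\<lambda>p xs. RV (xs ! 0) (xs ! 1))"
    and "\<And>j \<rho>. cyl \<rho> \<subseteq> V j \<longleftrightarrow> (\<exists>s. RV (prod_encode (j, str_code \<rho>)) s \<noteq> 0)"
    and "\<And>x s s'. s \<le> s' \<Longrightarrow> RV x s \<noteq> 0 \<Longrightarrow> RV x s' \<noteq> 0"
    using mltest_step_function[OF V_test] by blast
  ultimately interpret reduction U V RU RV
    using assms(1) V_test by unfold_locales
  show ?thesis
  proof (rule sW_le_LAY_if_computable_transform[OF U_test rf_out_bit[OF RV RU]])
    fix p X assume "delta_MLR p = Some X"
    then show "\<exists>Y. delta_MLR (out_bit RV RU p) = Some Y \<and> (\<forall>j. X \<in> V j \<longrightarrow> Y \<in> U j)"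
      using delta_MLR_out_bit in_V_imp_out_seq_in_U by blast
  qed
qed

end
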